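(* Let $a=(a_{ij})_{1\le i\le j\le n}\in(\mathbb C^\times)^N$, $b=(b_{ij})\in\mathbb C^N$, $\lambda=(\lambda_i)\in\mathbb C^n$, $\mathbf a\in\mathbb C^\times$, and let $\widetilde{\mathrm{ev}}^\pm_{\mathbf a}=\rho(a,b,\lambda)\circ\mathrm{ev}^\pm_{\mathbf a^\lambda_\pm}:\widetilde U_\varepsilon\to\mathrm{End}(V_N)$. Then for every $i\in I$ and $m\in\{0,\dots,l-1\}^N$: $\widetilde{\mathrm{ev}}^\pm_{\mathbf a}(E_i)v(m)=\rho(E_i)v(m)$, $\widetilde{\mathrm{ev}}^\pm_{\mathbf a}(F_i)v(m)=\rho(F_i)v(m)$, $\widetilde{\mathrm{ev}}^\pm_{\mathbf a}(K_{\alpha_i})v(m)=\rho(K_{\alpha_i})v(m)$, $$\widetilde{\mathrm{ev}}^\pm_{\mathbf a}(E_0)v(m)=\mathbf a\sum_{r^s\in R^F}(-1)^{s+n}a(\epsilon_{r^s})\varepsilon^{\pm(C_E(m+b,r^s)-\lambda^{(s)}-s)+n}[-m_{s-1,s-1}+m_{s,s}-b_{s-1,s-1}+b_{s,s}-\lambda_s]_\varepsilon\,v(m+\epsilon_{r^s}),$$ $$\widetilde{\mathrm{ev}}^\pm_{\mathbf a}(F_0)v(m)=\mathbf a^{-1}\sum_{r^s\in R^E}(-1)^{s-1}a(\alpha_{r^s})\varepsilon^{\pm(D_F(m+b,r^s)-s+n+1)-n}[-m_{1,n-s+1}-b_{1,n-s+1}]_\varepsilon\,v(m+\alpha_{r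^s}).$$
   Context: $n\ge1$, $I=\{1,\dots,n\}$, $N=n(n+1)/2$; $l>2$ odd with $\gcd(l,n+1)=1$; $\varepsilon$ a primitive $l$-th root of unity. Complex powers $\varepsilon^c$ are taken with respect to a fixed logarithm of $\varepsilon$ (for $c\in\frac1{n+1}\mathbb Z$ this agrees with $\varepsilon^{c'}$, $c'\in\mathbb Z$, $c'\equiv c$ mod $l$); $[c]_\varepsilon=(\varepsilon^c-\varepsilon^{-c})/(\varepsilon-\varepsilon^{-1})$; $[u,v]_x=uv-xvu$. $\alpha_i$ simple roots, $Q$, $(\alpha_i,\alpha_j)$ the $\mathfrak{sl}_{n+1}$ Cartan matrix, $\theta=\sum\alpha_i$; $\Lambda_i$ fundamental weights, $P$, $(\Lambda_i,\alpha_j)=\delta_{ij}$, $(\Lambda_i,\Lambda_j)=\min(i,j)(n+1-\max(i,j))/(n+1)$; $\lambda_{\Lambda_i}=\sum_j\lambda_j(\Lambda_i,\Lambda_j)$; $\lambda^{(s)}=\sum_{k=1}^{s-1}\lambda_k-\sum_{k=s+1}^n\lambda_k$. Algebras: $U'_\varepsilon$ is the $\mathbb C$-algebra generated by $E_i,F_i$ ($i\in I$), $K_\mu$ ($\mu\in P$) with the relations of $U_q(\mathfrak{sl}_{n+1})$ at $q=\varepsilon$ ($K_\mu E_jK_\mu^{-1}=\varepsilon^{(\mu,\alpha_j)}E_j$, $K_\mu F_jK_\mu^{-1}=\varepsilon^{-(\mu,\alpha_j)}F_j$, $[E_i,F_j]=\delta_{ij}(K_{\alpha_i}-K_{\alpha_i}^{-1})/(\varepsilon-\varepsilon^{-1})$,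 Serre), $U_\varepsilon$ the subalgebra with $\mu\in Q$; $\widetilde U_\varepsilon$ is the analogous algebra for $U_q(\widetilde{\mathfrak{sl}}_{n+1})$ with generators $E_i,F_i$ ($i=0,\dots,n$), $K_\mu$ ($\mu\in Q$), $(\mu,\alpha_0)=-(\mu,\theta)$. For $\mathbf b\in\mathbb C^\times$, $\mathrm{ev}^\pm_{\mathbf b}:\widetilde U_\varepsilon\to U'_\varepsilon$ are the homomorphisms fixing $E_i,F_i,K_\mu$ ($i\in I$) with $\mathrm{ev}^+_{\mathbf b}(E_0)=\varepsilon^{-1}\mathbf bK_{\Lambda_1}K_{\Lambda_n}^{-1}[F_n,[F_{n-1},\dots,[F_2,F_1]_{\varepsilon^{-1}}\dots]_{\varepsilon^{-1}}$, $\mathrm{ev}^-_{\mathbf b}(E_0)=\varepsilon^{-1}\mathbf bK_{\Lambda_1}^{-1}K_{\Lambda_n}[F_1,[F_2,\dots,[F_{n-1},F_n]_{\varepsilon^{-1}}\dots]_{\varepsilon^{-1}}$, $\mathrm{ev}^+_{\mathbf b}(F_0)=(-1)^{n-1}\varepsilon^n\mathbf b^{-1}K_{\Lambda_1}^{-1}K_{\Lambda_n}[E_n,[E_{n-1},\dots,[E_2,E_1]_{\varepsilon^{-1}}\dots]_{\varepsilon^{-1}}$, $\mathrm{ev}^-_{\mathbf b}(F_0)=(-1)^{n-1}\varepsilon^n\mathbf b^{-1}K_{\Lambda_1}K_{\Lambda_n}^{-1}[E_1,[E_2,\dots,[E_{n-1},E_n]_{\varepsilon^{-1}}\dots]_{\varepsilon^{-1}}$.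 Put $\mathbf a^\lambda_+=\mathbf a\varepsilon^{-\lambda_{\Lambda_1}+\lambda_{\Lambda_n}+n}$, $\mathbf a^\lambda_-=\mathbf a(-1)^{n+1}\varepsilon^{\lambda_{\Lambda_1}-\lambda_{\Lambda_n}+2n+1}$. Schnizer module: $V_N$ has basis $v(m)$, $m=(m_{ij})_{1\le i\le j\le n}\in\{0,\dots,l-1\}^N$, with $v(m+lm')=v(m)$ for $m'\in\mathbb Z^N$. $\epsilon_{ij}$ is the unit vector at $(i,j)$; $\alpha_{i,j}=\sum_{k=j+1}^i\epsilon_{k-1,n-i+k}-\sum_{k=j}^i\epsilon_{k,n-i+k}$ ($j\le i$). For $c\in\mathbb C^N$ ($c_{ij}=0$ outside $1\le i\le j\le n$): $M_{i,j}(c)=\sum_{k=i-1}^{j-1}(c_{i,k}-c_{i-1,k})+\sum_{k=i}^j(c_{i,k}-c_{i+1,k})$, $N_{i,j}(c)=c_{j-1,n-i+j}-c_{j,n-i+j}$, $\mu_i(c)=\sum_{k=i-1}^nc_{i-1,k}-2\sum_{k=i}^nc_{i,k}+\sum_{k=i+1}^nc_{i+1,k}$; for $c\in\mathbb Z^N$, $a(c)=\prod a_{ij}^{c_{ij}}$. $\rho=\rho(a,b,\lambda):U'_\varepsilon\to\mathrm{End}(V_N)$ is the representation $E_iv(m)=\sum_{j=1}^ia(\alpha_{i,j})[N_{i,j}(m+b)]_\varepsilon v(m+\alpha_{i,j})$, $F_iv(m)=\sum_{j=i}^na_{i,j}[M_{i,j}(m+b)-\lambda_i]_\varepsilon v(m+\epsilon_{i,j})$,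 $K_{\alpha_i}v(m)=\varepsilon^{\mu_i(m+b)+\lambda_i}v(m)$, $K_{\Lambda_i}v(m)=\varepsilon^{-\sum_{k=i}^n(m_{ik}+b_{ik})+\lambda_{\Lambda_i}}v(m)$. Index sets: for $s\in I$, $R_s=\{r^s=(r^s_k)_{k\in I}\in I^n: r^s_1\ge\dots\ge r^s_{s-1}\ge r^s_s<r^s_{s+1}<\dots<r^s_n\}$, $R^F_s=\{r^s\in R_s: k\le r^s_k\le n\ \forall k\}$, $R^E_s=\{r^s\in R_s:1\le r^s_k\le k\ \forall k\}$, $R^F=\bigsqcup_sR^F_s$, $R^E=\bigsqcup_sR^E_s$ (here $s$ is part of the data of $r^s$). $\epsilon_{r^s}=\sum_k\epsilon_{k,r^s_k}$, $\alpha_{r^s}=\sum_k\alpha_{k,r^s_k}$. With $r^s_0:=n$: $C_E(c,r^s)=c_{s-1,s-1}+\sum_{k=1}^{s-1}\sum_{p=r^s_{k+1}}^{r^s_k-1}c_{k,p}-\sum_{k=1}^s\sum_{p=r^s_k+1}^{r^s_{k-1}}c_{k,p}$ for $r^s\in R^F_s$, and $D_F(c,r^s)=-c_{n,n}+\sum_{k=1}^{n-s+1}c_{1,k}-\sum_{k=s+1}^n(c_{r^s_k-1,n-k+r^s_k}-c_{r^s_k,n-k+r^s_k})$ for $r^s\in R^E_s$. *)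

theory Defs
  imports Complex_Main
begin

(* Basis indices m = (m_ij), stored as functions nat => nat => int, zero outside
   the index set 1 <= i <= j <= n. *)
type_synonym idx = "nat \<Rightarrow> nat \<Rightarrow> int"
type_synonym cvec = "nat \<Rightarrow> nat \<Rightarrow> complex"
type_synonym vect = "idx \<Rightarrow> complex"
type_synonym oper = "vect \<Rightarrow> vect"

definition valid :: "nat \<Rightarrow> nat \<Rightarrow> nat \<Rightarrow> bool" where
  "valid n i j \<longleftrightarrow> 1 \<le> i \<and> i \<le> j \<and> j \<le> n"

definition basis_idx :: "nat \<Rightarrow> nat \<Rightarrow> idx set" where
  "basis_idx n l = {m. \<forall>i j. (valid n i j \<longrightarrow> 0 \<le> m i j \<and> m i j < int l)
                              \<and> (\<not> valid n i j \<longrightarrow> m i j = 0)}"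

definition red :: "nat \<Rightarrow> nat \<Rightarrow> idx \<Rightarrow> idx" where
  "red n l m = (\<lambda>i j. if valid n i j then m i j mod int l else 0)"

(* the basis vector v(m), with v(m + l m') = v(m) *)
definition vbas :: "nat \<Rightarrow> nat \<Rightarrow> idx \<Rightarrow> vect" where
  "vbas n l m = (\<lambda>k. if k = red n l m then 1 else 0)"

definition lin :: "nat \<Rightarrow> nat \<Rightarrow> (idx \<Rightarrow> vect) \<Rightarrow> oper" where
  "lin n l f x = (\<lambda>k. \<Sum>m\<in>basis_idx n l. x m * f m k)"

definition uvec :: "nat \<Rightarrow> nat \<Rightarrow> idx" where
  "uvec i j = (\<lambda>p q. if p = i \<and> q = j then 1 else 0)"

definition iadd :: "idx \<Rightarrow> idx \<Rightarrow> idx" where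
  "iadd m c = (\<lambda>i j. m i j + c i j)"

definition cadd :: "idx \<Rightarrow> cvec \<Rightarrow> cvec" where
  "cadd m b = (\<lambda>i j. of_int (m i j) + b i j)"

definition alpha :: "nat \<Rightarrow> nat \<Rightarrow> nat \<Rightarrow> idx" where
  "alpha n i j = (\<lambda>p q. (\<Sum>k\<in>{j+1..i}. uvec (k-1) (n-i+k) p q) - (\<Sum>k\<in>{j..i}. uvec k (n-i+k) p q))"

(* complex powers eps^c = exp (c * L), L the fixed logarithm of eps *)
definition qpow :: "complex \<Rightarrow> complex \<Rightarrow> complex" where
  "qpow L c = exp (c * L)"

definition qint :: "complex \<Rightarrow> complex \<Rightarrow> complex" where
  "qint L c = (qpow L c - qpow L (- c)) / (exp L - exp (- L))"

definition apow :: "nat \<Rightarrow> cvec \<Rightarrow> idx \<Rightarrow> complex" where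
  "apow n a c = (\<Prod>i\<in>{1..n}. \<Prod>j\<in>{i..n}. a i j powi c i j)"

definition Mf :: "cvec \<Rightarrow> nat \<Rightarrow> nat \<Rightarrow> complex" where
  "Mf c i j = (\<Sum>k\<in>{i-1..j-1}. c i k - c (i-1) k) + (\<Sum>k\<in>{i..j}. c i k - c (i+1) k)"

definition Nf :: "nat \<Rightarrow> cvec \<Rightarrow> nat \<Rightarrow> nat \<Rightarrow> complex" where
  "Nf n c i j = c (j-1) (n-i+j) - c j (n-i+j)"

definition muf :: "nat \<Rightarrow> cvec \<Rightarrow> nat \<Rightarrow> complex" where
  "muf n c i = (\<Sum>k\<in>{i-1..n}. c (i-1) k) - 2 * (\<Sum>k\<in>{i..n}. c i k) + (\<Sum>k\<in>{i+1..n}. c (i+1) k)"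

definition pairLL :: "nat \<Rightarrow> nat \<Rightarrow> nat \<Rightarrow> complex" where
  "pairLL n i j = of_nat (min i j * (n + 1 - max i j)) / of_nat (n + 1)"

definition lamLam :: "nat \<Rightarrow> (nat \<Rightarrow> complex) \<Rightarrow> nat \<Rightarrow> complex" where
  "lamLam n lam i = (\<Sum>j\<in>{1..n}. lam j * pairLL n i j)"

definition lamS :: "nat \<Rightarrow> (nat \<Rightarrow> complex) \<Rightarrow> nat \<Rightarrow> complex" where
  "lamS n lam s = (\<Sum>k\<in>{1..s-1}. lam k) - (\<Sum>k\<in>{s+1..n}. lam k)"

definition rhoE :: "nat \<Rightarrow> nat \<Rightarrow> complex \<Rightarrow> cvec \<Rightarrow> cvec \<Rightarrow> (nat \<Rightarrow> complex) \<Rightarrow> nat \<Rightarrow> oper" where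
  "rhoE n l L a b lam i = lin n l (\<lambda>m k. \<Sum>j\<in>{1..i}.
      apow n a (alpha n i j) * qint L (Nf n (cadd m b) i j) * vbas n l (iadd m (alpha n i j)) k)"

definition rhoF :: "nat \<Rightarrow> nat \<Rightarrow> complex \<Rightarrow> cvec \<Rightarrow> cvec \<Rightarrow> (nat \<Rightarrow> complex) \<Rightarrow> nat \<Rightarrow> oper" where
  "rhoF n l L a b lam i = lin n l (\<lambda>m k. \<Sum>j\<in>{i..n}.
      a i j * qint L (Mf (cadd m b) i j - lam i) * vbas n l (iadd m (uvec i j)) k)"

definition rhoKa :: "nat \<Rightarrow> nat \<Rightarrow> complex \<Rightarrow> cvec \<Rightarrow> cvec \<Rightarrow> (nat \<Rightarrow> complex) \<Rightarrow> nat \<Rightarrow> oper" where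
  "rhoKa n l L a b lam i = lin n l (\<lambda>m k.
      qpow L (muf n (cadd m b) i + lam i) * vbas n l m k)"

definition rhoKL :: "nat \<Rightarrow> nat \<Rightarrow> complex \<Rightarrow> cvec \<Rightarrow> cvec \<Rightarrow> (nat \<Rightarrow> complex) \<Rightarrow> nat \<Rightarrow> oper" where
  "rhoKL n l L a b lam i = lin n l (\<lambda>m k.
      qpow L (- (\<Sum>k'\<in>{i..n}. cadd m b i k') + lamLam n lam i) * vbas n l m k)"

definition rhoKLinv :: "nat \<Rightarrow> nat \<Rightarrow> complex \<Rightarrow> cvec \<Rightarrow> cvec \<Rightarrow> (nat \<Rightarrow> complex) \<Rightarrow> nat \<Rightarrow> oper" where
  "rhoKLinv n l L a b lam i = lin n l (\<lambda>m k.
      qpow L ((\<Sum>k'\<in>{i..n}. cadd m b i k') - lamLam n lam i) * vbas n l m k)"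

(* rho(K_{alpha_0}) = rho(K_{-theta}) *)
definition rhoK0 :: "nat \<Rightarrow> nat \<Rightarrow> complex \<Rightarrow> cvec \<Rightarrow> cvec \<Rightarrow> (nat \<Rightarrow> complex) \<Rightarrow> oper" where
  "rhoK0 n l L a b lam = lin n l (\<lambda>m k.
      qpow L (- (\<Sum>i\<in>{1..n}. muf n (cadd m b) i + lam i)) * vbas n l m k)"

definition smul :: "complex \<Rightarrow> oper \<Rightarrow> oper" where
  "smul c A = (\<lambda>x k. c * A x k)"

definition qcomm :: "complex \<Rightarrow> oper \<Rightarrow> oper \<Rightarrow> oper" where
  "qcomm q A B = (\<lambda>x k. A (B x) k - q * B (A x) k)"

fun nest_up :: "complex \<Rightarrow> (nat \<Rightarrow> oper) \<Rightarrow> nat \<Rightarrow> oper" where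
  "nest_up q X 0 = id"
| "nest_up q X (Suc 0) = X 1"
| "nest_up q X (Suc (Suc k)) = qcomm q (X (Suc (Suc k))) (nest_up q X (Suc k))"

definition nest_down :: "complex \<Rightarrow> (nat \<Rightarrow> oper) \<Rightarrow> nat \<Rightarrow> oper" where
  "nest_down q X n = nest_up q (\<lambda>j. X (n + 1 - j)) n"

definition apar :: "bool \<Rightarrow> nat \<Rightarrow> complex \<Rightarrow> (nat \<Rightarrow> complex) \<Rightarrow> complex \<Rightarrow> complex" where
  "apar pl n L lam A = (if pl
     then A * qpow L (- lamLam n lam 1 + lamLam n lam n + of_nat n)
     else A * (-1) ^ (n + 1) * qpow L (lamLam n lam 1 - lamLam n lam n + 2 * of_nat n + 1))"

(* rho o ev^{+}_{bb} resp. rho o ev^{-}_{bb} on E_0 and F_0 (pl = True means +) *)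
definition evE0 :: "bool \<Rightarrow> nat \<Rightarrow> nat \<Rightarrow> complex \<Rightarrow> cvec \<Rightarrow> cvec \<Rightarrow> (nat \<Rightarrow> complex) \<Rightarrow> complex \<Rightarrow> oper" where
  "evE0 pl n l L a b lam bb = (if pl
     then smul (exp (- L) * bb) (rhoKL n l L a b lam 1 \<circ> rhoKLinv n l L a b lam n
             \<circ> nest_up (exp (- L)) (rhoF n l L a b lam) n)
     else smul (exp (- L) * bb) (rhoKLinv n l L a b lam 1 \<circ> rhoKL n l L a b lam n
             \<circ> nest_down (exp (- L)) (rhoF n l L a b lam) n))"

definition evF0 :: "bool \<Rightarrow> nat \<Rightarrow> nat \<Rightarrow> complex \<Rightarrow> cvec \<Rightarrow> cvec \<Rightarrow> (nat \<Rightarrow> complex) \<Rightarrow> complex \<Rightarrow> oper" where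
  "evF0 pl n l L a b lam bb = (if pl
     then smul ((-1) ^ (n - 1) * exp L ^ n * inverse bb) (rhoKLinv n l L a b lam 1 \<circ> rhoKL n l L a b lam n
             \<circ> nest_up (exp (- L)) (rhoE n l L a b lam) n)
     else smul ((-1) ^ (n - 1) * exp L ^ n * inverse bb) (rhoKL n l L a b lam 1 \<circ> rhoKLinv n l L a b lam n
             \<circ> nest_down (exp (- L)) (rhoE n l L a b lam) n))"

(* generators of U_eps(affine sl_{n+1}): E_i, F_i, K_{alpha_i}, i = 0..n *)
datatype gen = Eg nat | Fg nat | Kg nat

fun evt :: "bool \<Rightarrow> nat \<Rightarrow> nat \<Rightarrow> complex \<Rightarrow> cvec \<Rightarrow> cvec \<Rightarrow> (nat \<Rightarrow> complex) \<Rightarrow> complex \<Rightarrow> gen \<Rightarrow> oper" where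
  "evt pl n l L a b lam A (Eg i) =
     (if i = 0 then evE0 pl n l L a b lam (apar pl n L lam A) else rhoE n l L a b lam i)"
| "evt pl n l L a b lam A (Fg i) =
     (if i = 0 then evF0 pl n l L a b lam (apar pl n L lam A) else rhoF n l L a b lam i)"
| "evt pl n l L a b lam A (Kg i) =
     (if i = 0 then rhoK0 n l L a b lam else rhoKa n l L a b lam i)"

(* index sets R_s, R^F_s, R^E_s; r^s stored as r : nat => nat, zero outside {1..n} *)
definition Rshape :: "nat \<Rightarrow> nat \<Rightarrow> (nat \<Rightarrow> nat) \<Rightarrow> bool" where
  "Rshape n s r \<longleftrightarrow> (\<forall>k. 1 \<le> k \<and> k < s \<longrightarrow> r (k + 1) \<le> r k)
                     \<and> (\<forall>k. s \<le> k \<and> k < n \<longrightarrow> r k < r (k + 1))"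

definition RFs :: "nat \<Rightarrow> nat \<Rightarrow> (nat \<Rightarrow> nat) set" where
  "RFs n s = {r. (\<forall>k. k \<notin> {1..n} \<longrightarrow> r k = 0) \<and> (\<forall>k\<in>{1..n}. k \<le> r k \<and> r k \<le> n) \<and> Rshape n s r}"

definition REs :: "nat \<Rightarrow> nat \<Rightarrow> (nat \<Rightarrow> nat) set" where
  "REs n s = {r. (\<forall>k. k \<notin> {1..n} \<longrightarrow> r k = 0) \<and> (\<forall>k\<in>{1..n}. 1 \<le> r k \<and> r k \<le> k) \<and> Rshape n s r}"

definition epsr :: "nat \<Rightarrow> (nat \<Rightarrow> nat) \<Rightarrow> idx" where
  "epsr n r = (\<lambda>p q. \<Sum>k\<in>{1..n}. uvec k (r k) p q)"

definition alphar :: "nat \<Rightarrow> (nat \<Rightarrow> nat) \<Rightarrow> idx" where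
  "alphar n r = (\<lambda>p q. \<Sum>k\<in>{1..n}. alpha n k (r k) p q)"

definition CE :: "nat \<Rightarrow> cvec \<Rightarrow> (nat \<Rightarrow> nat) \<Rightarrow> nat \<Rightarrow> complex" where
  "CE n c r s = (let r0 = (\<lambda>k. if k = 0 then n else r k) in
     c (s-1) (s-1) + (\<Sum>k\<in>{1..s-1}. \<Sum>p\<in>{r (k+1)..r k - 1}. c k p)
       - (\<Sum>k\<in>{1..s}. \<Sum>p\<in>{r k + 1..r0 (k-1)}. c k p))"

definition DF :: "nat \<Rightarrow> cvec \<Rightarrow> (nat \<Rightarrow> nat) \<Rightarrow> nat \<Rightarrow> complex" where
  "DF n c r s = - c n n + (\<Sum>k\<in>{1..n-s+1}. c 1 k)
     - (\<Sum>k\<in>{s+1..n}. c (r k - 1) (n - k + r k) - c (r k) (n - k + r k))"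

end

theory Submission
  imports Defs
begin

(* Each of rho(F_i), rho(E_i) maps v(m) to a combination of basis vectors v(m + d) with
   coefficients that are q-numbers [Z] of linear functionals Z of m + b, and the shift d of one
   generator changes the functional of a neighbouring generator by at most one unit.  For such
   a chain of operators the nested q-commutator [T_k,[T_(k-1),...,[T_2,T_1]_q...]_q]_q sends v(m)
   to a sum over paths r (a summand r_i for every T_i): the identities
   [x] - q^-1 [x-1] = q^(x-1) and [x-1] - q^-1 [x] = -q^-x make all coefficients cancel except
   on paths of a single "valley" shape with turning point s, where the coefficient is a sign
   times a power of q times the one q-number [Z_s] (induction on k).  For the F's the valley
   paths are R^F_s, for the E's R^E_s, and the reversed nests [X_1,[X_2,...]] are handled by
   reversing paths.  The diagonal factors rho(K_Lambda_1^(+-1) K_Lambda_n^(-+1)) and the spectral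
   shift a^lambda_(+-) contribute further powers of q, and telescoping the row sums of m + b turns
   the total exponent into C_E resp. D_F. *)

section \<open>Basis vectors and linear operators\<close>

definition supported :: "nat \<Rightarrow> (nat \<Rightarrow> nat \<Rightarrow> 'a::zero) \<Rightarrow> bool" where
  "supported n c \<longleftrightarrow> (\<forall>i j. \<not> valid n i j \<longrightarrow> c i j = 0)"

lemma supported_iadd: "supported n m \<Longrightarrow> supported n u \<Longrightarrow> supported n (iadd m u)"
  by (simp add: supported_def iadd_def)

lemma supported_cadd: "supported n m \<Longrightarrow> supported n b \<Longrightarrow> supported n (cadd m b)"
  by (simp add: supported_def cadd_def)

lemma supported_basis_idx: "m \<in> basis_idx n l \<Longrightarrow> supported n m"
  by (simp add: basis_idx_def supported_def)

lemma cadd_iadd: "cadd (iadd m u) b = (\<lambda>i j. cadd m b i j + of_int (u i j))"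
  by (simp add: cadd_def iadd_def fun_eq_iff)

lemma finite_basis_idx: "finite (basis_idx n l)"
proof -
  let ?V = "{(i, j). valid n i j}"
  let ?S = "{f :: nat \<times> nat \<Rightarrow> int. \<forall>x. (x \<in> ?V \<longrightarrow> f x \<in> {0..<int l}) \<and> (x \<notin> ?V \<longrightarrow> f x = 0)}"
  have "finite ?V"
    by (rule finite_subset[of _ "{1..n} \<times> {1..n}"]) (auto simp: valid_def)
  then have "finite ?S" by (rule finite_set_of_finite_funs) auto
  moreover have "basis_idx n l \<subseteq> curry ` ?S"
  proof
    fix m assume "m \<in> basis_idx n l"
    then have "case_prod m \<in> ?S" by (auto simp: basis_idx_def)
    moreover have "m = curry (case_prod m)" by simp
    ultimately show "m \<in> curry ` ?S" by blast
  qed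
  ultimately show ?thesis by (meson finite_imageI finite_subset)
qed

lemma red_in_basis_idx: "l > 0 \<Longrightarrow> red n l m \<in> basis_idx n l"
  by (auto simp: red_def basis_idx_def)

lemma red_red: "red n l (red n l m) = red n l m"
  by (auto simp: red_def fun_eq_iff)

lemma vbas_red [simp]: "vbas n l (red n l m) = vbas n l m"
  by (simp add: vbas_def red_red)

lemma vbas_iadd_red [simp]: "vbas n l (iadd (red n l m) u) = vbas n l (iadd m u)"
proof -
  have "red n l (iadd (red n l m) u) = red n l (iadd m u)"
    by (auto simp: red_def iadd_def fun_eq_iff mod_add_left_eq)
  then show ?thesis by (simp add: vbas_def)
qed

lemma lin_vbas: "l > 0 \<Longrightarrow> lin n l f (vbas n l m) = f (red n l m)"
proof (rule ext)
  fix k assume "l > 0"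
  have "lin n l f (vbas n l m) k = (\<Sum>m'\<in>basis_idx n l. if m' = red n l m then f m' k else 0)"
    unfolding lin_def vbas_def by (rule sum.cong) auto
  also have "\<dots> = f (red n l m) k"
    using red_in_basis_idx[OF \<open>l > 0\<close>] by (simp add: sum.delta[OF finite_basis_idx])
  finally show "lin n l f (vbas n l m) k = f (red n l m) k" .
qed

definition lin_op :: "oper \<Rightarrow> bool" where
  "lin_op A \<longleftrightarrow> (\<forall>x y. A (\<lambda>k. x k + y k) = (\<lambda>k. A x k + A y k))
                 \<and> (\<forall>c x. A (\<lambda>k. c * x k) = (\<lambda>k. c * A x k))"

lemma lin_op_sum:
  assumes "lin_op A"
  shows "A (\<lambda>k. \<Sum>y\<in>S. c y * v y k) = (\<lambda>k. \<Sum>y\<in>S. c y * A (v y) k)"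
proof -
  have add: "\<And>x y. A (\<lambda>k. x k + y k) = (\<lambda>k. A x k + A y k)"
    and scale: "\<And>c x. A (\<lambda>k. c * x k) = (\<lambda>k. c * A x k)"
    using assms unfolding lin_op_def by blast+
  have zero: "A (\<lambda>k. 0) = (\<lambda>k. 0)" using scale[of 0 "\<lambda>_. 0"] by simp
  show ?thesis
    by (induction S rule: infinite_finite_induct) (simp_all add: zero add scale)
qed

lemma lin_op_lin: "lin_op (lin n l f)"
  by (simp add: lin_op_def lin_def fun_eq_iff sum.distrib sum_distrib_left distrib_right mult.assoc)

lemma lin_op_qcomm: "lin_op A \<Longrightarrow> lin_op B \<Longrightarrow> lin_op (qcomm q A B)"
  unfolding lin_op_def qcomm_def by (simp add: algebra_simps)

lemma lin_op_id: "lin_op id"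
  by (simp add: lin_op_def)

lemma lin_op_nest_up: "(\<And>i. lin_op (X i)) \<Longrightarrow> lin_op (nest_up q X k)"
  by (induction q X k rule: nest_up.induct) (auto intro: lin_op_id lin_op_qcomm)

lemma diagonal_op_sum:
  assumes "lin_op K" and "\<And>m'. supported n m' \<Longrightarrow> K (vbas n l m') = (\<lambda>x. \<delta> m' * vbas n l m' x)"
    and "\<And>r. r \<in> P \<Longrightarrow> supported n (iadd m (D r))"
  shows "K (\<lambda>x. \<Sum>r\<in>P. C r * vbas n l (iadd m (D r)) x)
       = (\<lambda>x. \<Sum>r\<in>P. C r * \<delta> (iadd m (D r)) * vbas n l (iadd m (D r)) x)"
  unfolding lin_op_sum[OF assms(1)] by (intro ext sum.cong) (simp_all add: assms(2,3) mult.assoc)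

section \<open>q-numbers\<close>

lemma qpow_add: "qpow L (x + y) = qpow L x * qpow L y"
  by (simp add: qpow_def distrib_right exp_add)

lemma exp_minus_qpow: "exp (- L) = qpow L (- 1)"
  by (simp add: qpow_def)

text \<open>With \<open>u = q\<^sup>x\<close> and \<open>e = q\<close> these are \<open>[x] - q\<^sup>-\<^sup>1[x - 1] = q\<^sup>x\<^sup>-\<^sup>1\<close> and
  \<open>[x - 1] - q\<^sup>-\<^sup>1[x] = -q\<^sup>-\<^sup>x\<close>.\<close>

lemma q_number_identities:
  fixes u e :: complex
  assumes "u \<noteq> 0" "e \<noteq> 0" "e * e - 1 \<noteq> 0"
  shows "(u - 1 / u) / (e - 1 / e) - 1 / e * ((u / e - e / u) / (e - 1 / e)) = u / e"
    and "(u / e - e / u) / (e - 1 / e) - 1 / e * ((u - 1 / u) / (e - 1 / e)) = - (1 / u)"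
proof -
  have D: "e - 1 / e = (e * e - 1) / e" using assms by (simp add: field_simps)
  have N1: "(u - 1 / u) - 1 / e * (u / e - e / u) = u * (e * e - 1) / (e * e)"
    and N2: "(u / e - e / u) - 1 / e * (u - 1 / u) = - ((e * e - 1) / (e * u))"
    using assms by (simp_all add: field_simps)
  have "(u - 1 / u) / (e - 1 / e) - 1 / e * ((u / e - e / u) / (e - 1 / e))
      = ((u - 1 / u) - 1 / e * (u / e - e / u)) / (e - 1 / e)" by (simp add: diff_divide_distrib)
  also have "\<dots> = u / e" unfolding N1 D using assms by (simp add: field_simps)
  finally show "(u - 1 / u) / (e - 1 / e) - 1 / e * ((u / e - e / u) / (e - 1 / e)) = u / e" .
  have "(u / e - e / u) / (e - 1 / e) - 1 / e * ((u - 1 / u) / (e - 1 / e))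
      = ((u / e - e / u) - 1 / e * (u - 1 / u)) / (e - 1 / e)" by (simp add: diff_divide_distrib)
  also have "\<dots> = - (1 / u)" unfolding N2 D using assms by (simp add: field_simps)
  finally show "(u / e - e / u) / (e - 1 / e) - 1 / e * ((u - 1 / u) / (e - 1 / e)) = - (1 / u)" .
qed

lemma qpow_exp_forms:
  "qpow L x = exp (x * L)" "qpow L (- x) = 1 / exp (x * L)"
  "qpow L (x - 1) = exp (x * L) / exp L" "qpow L (- (x - 1)) = exp L / exp (x * L)"
  "exp (- L) = 1 / exp L"
  by (simp_all add: qpow_def exp_minus exp_diff[symmetric] inverse_eq_divide algebra_simps)

lemma qint_sub_qint_pred:
  assumes "exp L ^ 2 \<noteq> 1"
  shows "qint L x - exp (- L) * qint L (x - 1) = qpow L (x - 1)"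
  unfolding qint_def qpow_exp_forms(1-4)[of L x] qpow_exp_forms(5)
  using q_number_identities(1)[of "exp (x * L)" "exp L"] assms by (simp add: power2_eq_square)

lemma qint_pred_sub_qint:
  assumes "exp L ^ 2 \<noteq> 1"
  shows "qint L (x - 1) - exp (- L) * qint L x = - qpow L (- x)"
  unfolding qint_def qpow_exp_forms(1-4)[of L x] qpow_exp_forms(5)
  using q_number_identities(2)[of "exp (x * L)" "exp L"] assms by (simp add: power2_eq_square)

lemma qpow_periodic:
  assumes "exp L ^ l = 1" and "z \<in> \<int>"
  shows "qpow L (x + of_nat l * z) = qpow L x"
proof -
  obtain k where k: "z = of_int k" using assms(2) Ints_cases by blast
  have "exp (of_nat l * z * L) = (exp L ^ l) powi k"
    by (simp add: k exp_power_int exp_of_nat_mult[symmetric] mult.commute mult.left_commute)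
  then show ?thesis unfolding qpow_def using assms(1) by (simp add: distrib_right exp_add)
qed

lemma qint_periodic:
  assumes "exp L ^ l = 1" and "z \<in> \<int>"
  shows "qint L (x + of_nat l * z) = qint L x"
proof -
  have "- (x + of_nat l * z) = - x + of_nat l * (- z)" by simp
  then show ?thesis
    unfolding qint_def using qpow_periodic[OF assms(1)] assms(2) by (metis Ints_minus)
qed

section \<open>Nested q-commutators of shift operators\<close>

definition balance :: "nat \<Rightarrow> (nat \<Rightarrow> complex) \<Rightarrow> nat \<Rightarrow> complex" where
  "balance k X s = (\<Sum>i\<in>{1..<s}. X i) - (\<Sum>i\<in>{s<..k}. X i)"

definition shape_coeff :: "complex \<Rightarrow> nat \<Rightarrow> (nat \<Rightarrow> complex) \<Rightarrow> nat \<Rightarrow> complex" where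
  "shape_coeff L k X s = (-1) ^ (k - s) * qpow L (balance k X s - of_nat s + 1) * qint L (X s)"

lemma balance_cong:
  assumes "\<And>i. 1 \<le> i \<Longrightarrow> i \<le> k \<Longrightarrow> X i = Y i" and "s \<le> k"
  shows "balance k X s = balance k Y s"
  unfolding balance_def using assms by (auto intro!: sum.cong arg_cong2[where f = minus])

lemma balance_Suc: "s \<le> k \<Longrightarrow> balance (Suc k) X s = balance k X s - X (Suc k)"
proof -
  assume "s \<le> k"
  then have "{s<..Suc k} = insert (Suc k) {s<..k}" by auto
  then show ?thesis by (simp add: balance_def)
qed

lemma balance_Suc_self: "1 \<le> k \<Longrightarrow> balance (Suc k) X (Suc k) = balance k X k + X k"
proof -
  assume "1 \<le> k"
  then have "{1..<Suc k} = insert k {1..<k}" by auto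
  then show ?thesis by (simp add: balance_def)
qed

lemma balance_decrement_last:
  assumes "\<And>i. 1 \<le> i \<Longrightarrow> i \<le> k \<Longrightarrow> X' i = (if i = k then X i - 1 else X i)" and "s < k"
  shows "balance k X' s = balance k X s + 1"
proof -
  obtain k0 where k0: "k = Suc k0" "s \<le> k0" using \<open>s < k\<close> by (cases k) auto
  have "balance k X' s = balance k0 X' s - X' k" unfolding k0 by (rule balance_Suc[OF k0(2)])
  also have "balance k0 X' s = balance k0 X s" using assms k0 by (intro balance_cong) auto
  also have "balance k0 X s = balance k X s + X k" unfolding k0 using balance_Suc[OF k0(2)] by simp
  finally show ?thesis using assms(1)[of k] \<open>s < k\<close> by simp
qed

lemma shape_coeff_cong:
  assumes "\<And>i. 1 \<le> i \<Longrightarrow> i \<le> k \<Longrightarrow> X i = Y i" and "s \<in> {1..k}"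
  shows "shape_coeff L k X s = shape_coeff L k Y s"
  using assms balance_cong[OF assms(1)] by (simp add: shape_coeff_def)

lemma shape_coeff_Suc:
  assumes "\<And>i. 1 \<le> i \<Longrightarrow> i \<le> k \<Longrightarrow> Y i = X i" and "s \<in> {1..k}"
  shows "shape_coeff L (Suc k) Y s = - shape_coeff L k X s * qpow L (- Y (Suc k))"
proof -
  have s: "1 \<le> s" "s \<le> k" using assms(2) by auto
  have "qpow L (balance (Suc k) Y s - of_nat s + 1)
      = qpow L (balance k X s - of_nat s + 1) * qpow L (- Y (Suc k))"
  proof -
    have "balance k Y s = balance k X s" using assms(1) s by (intro balance_cong) auto
    then have bs: "balance (Suc k) Y s = balance k X s - Y (Suc k)" using balance_Suc[OF s(2), of Y] by simp
    show ?thesis unfolding qpow_add[symmetric] bs by (simp add: algebra_simps)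
  qed
  moreover have "(-1::complex) ^ (Suc k - s) = - ((-1) ^ (k - s))" using s by (simp add: Suc_diff_le)
  ultimately show ?thesis using assms s by (simp add: shape_coeff_def)
qed

lemma shape_coeff_decrement_last:
  assumes "\<And>i. 1 \<le> i \<Longrightarrow> i \<le> k \<Longrightarrow> X' i = (if i = k then X i - 1 else X i)" and "s \<in> {1..<k}"
  shows "shape_coeff L k X s - exp (- L) * shape_coeff L k X' s = 0"
proof -
  have "qpow L (balance k X' s - of_nat s + 1) = qpow L (balance k X s - of_nat s + 1) * qpow L 1"
    using balance_decrement_last[OF assms(1)] assms(2) by (simp add: qpow_add[symmetric] algebra_simps)
  moreover have "X' s = X s" using assms by auto
  ultimately have "shape_coeff L k X' s = shape_coeff L k X s * qpow L 1"
    by (simp add: shape_coeff_def)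
  moreover have "exp (- L) * qpow L 1 = 1" by (simp add: qpow_def exp_minus)
  ultimately show ?thesis by (metis mult.left_commute mult_1_right right_minus_eq)
qed

lemma shape_coeff_decrement_last_self:
  assumes "\<And>i. 1 \<le> i \<Longrightarrow> i \<le> k \<Longrightarrow> X' i = (if i = k then X i - 1 else X i)"
    and "\<And>i. 1 \<le> i \<Longrightarrow> i \<le> k \<Longrightarrow> Y i = X i" and "1 \<le> k" and "exp L ^ 2 \<noteq> 1"
  shows "(shape_coeff L k X k - exp (- L) * shape_coeff L k X' k) * qint L (Y (Suc k))
       = shape_coeff L (Suc k) Y (Suc k)"
proof -
  have bX': "balance k X' k = balance k X k"
    using assms(1) by (auto simp: balance_def intro!: sum.cong)
  have bY: "balance (Suc k) Y (Suc k) = balance k X k + X k"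
    using balance_Suc_self[OF assms(3)] balance_cong[OF assms(2) order_refl] assms(2,3) by simp
  have "shape_coeff L k X k - exp (- L) * shape_coeff L k X' k
      = qpow L (balance k X k - of_nat k + 1) * (qint L (X k) - exp (- L) * qint L (X k - 1))"
  proof -
    have X'k: "X' k = X k - 1" using assms(1)[of k] assms(3) by simp
    show ?thesis using assms(3) unfolding shape_coeff_def bX' X'k by (simp add: algebra_simps)
  qed
  also have "\<dots> = qpow L (balance k X k - of_nat k + 1) * qpow L (X k - 1)"
    by (simp add: qint_sub_qint_pred[OF assms(4)])
  also have "\<dots> = qpow L (balance (Suc k) Y (Suc k) - of_nat (Suc k) + 1)"
    unfolding bY qpow_add[symmetric] by (simp add: algebra_simps)
  finally show ?thesis by (simp add: shape_coeff_def)
qed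

text \<open>Of two adjacent steps with summands \<open>i\<close> and \<open>j\<close> exactly one sees the shift of the other, as a
  unit drop of its q-number argument: the later step if \<open>R i j\<close>, the earlier one otherwise.\<close>

locale qcomm_chain =
  fixes n l :: nat and L :: complex and T :: "nat \<Rightarrow> oper" and J :: "nat \<Rightarrow> nat set"
    and d :: "nat \<Rightarrow> nat \<Rightarrow> idx" and w :: "nat \<Rightarrow> nat \<Rightarrow> complex"
    and Z :: "nat \<Rightarrow> idx \<Rightarrow> nat \<Rightarrow> complex" and R :: "nat \<Rightarrow> nat \<Rightarrow> bool"
  assumes q_square: "exp L ^ 2 \<noteq> 1"
    and finite_J: "finite (J k)"
    and lin_op_T: "lin_op (T k)"
    and T_vbas: "k \<in> {1..n} \<Longrightarrow> supported n m \<Longrightarrow>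
       T k (vbas n l m) = (\<lambda>x. \<Sum>j\<in>J k. w k j * qint L (Z k m j) * vbas n l (iadd m (d k j)) x)"
    and supported_d: "k \<in> {1..n} \<Longrightarrow> j \<in> J k \<Longrightarrow> supported n (d k j)"
    and Z_shift_prev: "1 \<le> k \<Longrightarrow> k < n \<Longrightarrow> i \<in> J k \<Longrightarrow> j \<in> J (Suc k) \<Longrightarrow> supported n m \<Longrightarrow>
       Z (Suc k) (iadd m (d k i)) j = Z (Suc k) m j - (if R i j then 1 else 0)"
    and Z_shift_next: "1 \<le> k \<Longrightarrow> k < n \<Longrightarrow> i \<in> J k \<Longrightarrow> j \<in> J (Suc k) \<Longrightarrow> supported n m \<Longrightarrow>
       Z k (iadd m (d (Suc k) j)) i = Z k m i - (if R i j then 0 else 1)"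
    and Z_shift_far: "k \<in> {1..n} \<Longrightarrow> p \<in> {1..n} \<Longrightarrow> p + 2 \<le> k \<or> k + 2 \<le> p \<Longrightarrow>
       i \<in> J k \<Longrightarrow> j \<in> J p \<Longrightarrow> supported n m \<Longrightarrow> Z k (iadd m (d p j)) i = Z k m i"
begin

definition paths :: "nat \<Rightarrow> (nat \<Rightarrow> nat) set" where
  "paths k = {r. (\<forall>i\<in>{1..k}. r i \<in> J i) \<and> (\<forall>i. i \<notin> {1..k} \<longrightarrow> r i = 0)}"

definition path_shift :: "nat \<Rightarrow> (nat \<Rightarrow> nat) \<Rightarrow> idx" where
  "path_shift k r = (\<lambda>p q. \<Sum>i\<in>{1..k}. d i (r i) p q)"

definition path_weight :: "nat \<Rightarrow> (nat \<Rightarrow> nat) \<Rightarrow> complex" where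
  "path_weight k r = (\<Prod>i\<in>{1..k}. w i (r i))"

text \<open>Consecutive steps are unrelated before the turning point \<open>s\<close> and related from \<open>s\<close> on; for
  \<open>R = (<)\<close> these are the index sets \<open>R\<^sub>s\<close>.\<close>

definition path_shape :: "nat \<Rightarrow> nat \<Rightarrow> (nat \<Rightarrow> nat) \<Rightarrow> bool" where
  "path_shape k s r \<longleftrightarrow> (\<forall>i. 1 \<le> i \<and> i < s \<longrightarrow> \<not> R (r i) (r (Suc i)))
                       \<and> (\<forall>i. s \<le> i \<and> i < k \<longrightarrow> R (r i) (r (Suc i)))"

definition shape_sum :: "nat \<Rightarrow> idx \<Rightarrow> (nat \<Rightarrow> nat) \<Rightarrow> complex" where
  "shape_sum k m r = (\<Sum>s\<in>{1..k}. if path_shape k s r then shape_coeff L k (\<lambda>i. Z i m (r i)) s else 0)"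

lemma finite_paths: "finite (paths k)"
proof -
  let ?B = "\<Union>i\<in>{1..k}. J i"
  have "finite {f. \<forall>x. (x \<in> {1..k} \<longrightarrow> f x \<in> ?B) \<and> (x \<notin> {1..k} \<longrightarrow> f x = 0)}"
    by (rule finite_set_of_finite_funs) (auto intro: finite_J)
  moreover have "paths k \<subseteq> {f. \<forall>x. (x \<in> {1..k} \<longrightarrow> f x \<in> ?B) \<and> (x \<notin> {1..k} \<longrightarrow> f x = 0)}"
    unfolding paths_def by blast
  ultimately show ?thesis by (rule finite_subset[rotated])
qed

lemma paths_0: "paths 0 = {\<lambda>_. 0}"
  by (auto simp: paths_def)

lemma sum_paths_Suc:
  "(\<Sum>r\<in>paths (Suc k). f r) = (\<Sum>r\<in>paths k. \<Sum>j\<in>J (Suc k). f (r(Suc k := j)))"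
proof -
  let ?ext = "\<lambda>(r, j). r(Suc k := j)"
  have inj: "inj_on ?ext (paths k \<times> J (Suc k))"
  proof (rule inj_onI, clarify)
    fix r j r' j' assume a: "r \<in> paths k" "r' \<in> paths k" "r(Suc k := j) = r'(Suc k := j')"
    then have "j = j'" by (metis fun_upd_same)
    moreover have "r i = r' i" for i
      using a fun_upd_apply[of r "Suc k" j i] fun_upd_apply[of r' "Suc k" j' i]
      by (cases "i = Suc k") (auto simp: paths_def)
    ultimately show "r = r' \<and> j = j'" by auto
  qed
  have img: "paths (Suc k) = ?ext ` (paths k \<times> J (Suc k))"
  proof (rule set_eqI, rule iffI)
    fix r' assume "r' \<in> paths (Suc k)"
    then have "(r'(Suc k := 0), r' (Suc k)) \<in> paths k \<times> J (Suc k)" by (auto simp: paths_def)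
    moreover have "r' = ?ext (r'(Suc k := 0), r' (Suc k))" by simp
    ultimately show "r' \<in> ?ext ` (paths k \<times> J (Suc k))" by (rule rev_image_eqI)
  qed (auto simp: paths_def)
  have "(\<Sum>r\<in>paths (Suc k). f r) = (\<Sum>x\<in>paths k \<times> J (Suc k). f (?ext x))"
    unfolding img by (rule sum.reindex[OF inj, unfolded comp_def])
  then show ?thesis by (simp add: sum.cartesian_product case_prod_beta)
qed

lemma iadd_path_shift_Suc:
  "iadd m (path_shift (Suc k) (r(Suc k := j))) = iadd (iadd m (path_shift k r)) (d (Suc k) j)"
  "iadd m (path_shift (Suc k) (r(Suc k := j))) = iadd (iadd m (d (Suc k) j)) (path_shift k r)"
  by (simp_all add: path_shift_def iadd_def fun_eq_iff add_ac)

lemma path_weight_Suc: "path_weight (Suc k) (r(Suc k := j)) = path_weight k r * w (Suc k) j"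
proof -
  have "(\<Prod>i\<in>{1..k}. w i ((r(Suc k := j)) i)) = path_weight k r"
    unfolding path_weight_def by (intro prod.cong) auto
  then show ?thesis unfolding path_weight_def by simp
qed

lemma supported_path_shift:
  assumes "r \<in> paths k" "t \<le> k" "k \<le> n"
  shows "supported n (path_shift t r)"
  using assms(2)
proof (induction t)
  case 0 then show ?case by (simp add: path_shift_def supported_def)
next
  case (Suc t)
  have "supported n (d (Suc t) (r (Suc t)))" using Suc.prems assms by (intro supported_d) (auto simp: paths_def)
  with Suc show ?case by (simp add: path_shift_def supported_def)
qed

lemma Z_far_path_shift:
  assumes "r \<in> paths k" "Suc k \<le> n" "t < k" "j \<in> J (Suc k)" "supported n m"
  shows "Z (Suc k) (iadd m (path_shift t r)) j = Z (Suc k) m j"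
  using assms(3)
proof (induction t)
  case 0 then show ?case by (simp add: path_shift_def iadd_def)
next
  case (Suc t)
  have "supported n (iadd m (path_shift t r))"
    using assms Suc.prems by (intro supported_iadd supported_path_shift[of r k]) auto
  then have "Z (Suc k) (iadd (iadd m (path_shift t r)) (d (Suc t) (r (Suc t)))) j = Z (Suc k) (iadd m (path_shift t r)) j"
    using assms Suc.prems by (intro Z_shift_far) (auto simp: paths_def)
  moreover have "iadd m (path_shift (Suc t) r) = iadd (iadd m (path_shift t r)) (d (Suc t) (r (Suc t)))"
    by (simp add: path_shift_def iadd_def fun_eq_iff add.assoc)
  ultimately show ?case using Suc by simp
qed

lemma Z_path_shift:
  assumes "r \<in> paths k" "Suc k \<le> n" "1 \<le> k" "j \<in> J (Suc k)" "supported n m"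
  shows "Z (Suc k) (iadd m (path_shift k r)) j = Z (Suc k) m j - (if R (r k) j then 1 else 0)"
proof -
  obtain t where t: "k = Suc t" using assms(3) by (cases k) auto
  have "supported n (iadd m (path_shift t r))"
    using assms t by (intro supported_iadd supported_path_shift[of r k]) auto
  then have "Z (Suc k) (iadd (iadd m (path_shift t r)) (d k (r k))) j
      = Z (Suc k) (iadd m (path_shift t r)) j - (if R (r k) j then 1 else 0)"
    using assms by (intro Z_shift_prev) (auto simp: paths_def)
  moreover have "iadd m (path_shift k r) = iadd (iadd m (path_shift t r)) (d k (r k))"
    by (simp add: t path_shift_def iadd_def fun_eq_iff add.assoc)
  ultimately show ?thesis using Z_far_path_shift[OF assms(1,2) _ assms(4,5), of t] t by simp
qed

lemma Z_shift_Suc_on_path: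
  assumes "r \<in> paths k" "Suc k \<le> n" "1 \<le> i" "i \<le> k" "j \<in> J (Suc k)" "supported n m"
  shows "Z i (iadd m (d (Suc k) j)) (r i) = (if i = k then Z i m (r i) - (if R (r k) j then 0 else 1) else Z i m (r i))"
proof (cases "i = k")
  case True then show ?thesis using assms by (simp add: paths_def Z_shift_next)
next
  case False then show ?thesis using assms by (auto simp: paths_def intro!: Z_shift_far)
qed

lemma path_shape_Suc_rel:
  assumes "1 \<le> k" "R (r k) j" "s \<in> {1..Suc k}"
  shows "path_shape (Suc k) s (r(Suc k := j)) \<longleftrightarrow> s \<le> k \<and> path_shape k s r"
  using assms unfolding path_shape_def
  by (auto simp: less_Suc_eq)

lemma path_shape_Suc_not_rel:
  assumes "1 \<le> k" "\<not> R (r k) j" "s \<in> {1..Suc k}"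
  shows "path_shape (Suc k) s (r(Suc k := j)) \<longleftrightarrow> s = Suc k \<and> path_shape k k r"
  using assms unfolding path_shape_def
  by (auto simp: less_Suc_eq)

lemma shape_sum_Suc_rel:
  assumes r: "r \<in> paths k" and k: "1 \<le> k" "Suc k \<le> n" and j: "j \<in> J (Suc k)" "R (r k) j"
    and m: "supported n m"
  shows "shape_sum (Suc k) m (r(Suc k := j)) = - shape_sum k m r * qpow L (- Z (Suc k) m j)"
    and "shape_sum k (iadd m (d (Suc k) j)) r = shape_sum k m r"
proof -
  let ?X = "\<lambda>i. Z i m (r i)" and ?Y = "\<lambda>i. Z i m ((r(Suc k := j)) i)"
  note shape = path_shape_Suc_rel[of k r j, OF k(1) j(2)]
  have "(\<Sum>s\<in>{1..Suc k}. if path_shape (Suc k) s (r(Suc k := j)) then shape_coeff L (Suc k) ?Y s else 0)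
      = (\<Sum>s\<in>{1..k}. if path_shape (Suc k) s (r(Suc k := j)) then shape_coeff L (Suc k) ?Y s else 0)"
    using shape[of "Suc k"] by simp
  also have "\<dots> = (\<Sum>s\<in>{1..k}. (if path_shape k s r then shape_coeff L k ?X s else 0) * - qpow L (- ?Y (Suc k)))"
    using shape shape_coeff_Suc[of k ?Y ?X] by (auto intro!: sum.cong)
  also have "\<dots> = - shape_sum k m r * qpow L (- Z (Suc k) m j)"
    unfolding shape_sum_def by (simp add: sum_distrib_right sum_negf)
  finally show "shape_sum (Suc k) m (r(Suc k := j)) = - shape_sum k m r * qpow L (- Z (Suc k) m j)"
    unfolding shape_sum_def .
  show "shape_sum k (iadd m (d (Suc k) j)) r = shape_sum k m r"
    unfolding shape_sum_def
    using Z_shift_Suc_on_path[OF r k(2) _ _ j(1) m] j(2) by (auto intro!: sum.cong shape_coeff_cong)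
qed

lemma shape_sum_Suc_not_rel:
  assumes r: "r \<in> paths k" and k: "1 \<le> k" "Suc k \<le> n" and j: "j \<in> J (Suc k)" "\<not> R (r k) j"
    and m: "supported n m"
  shows "shape_sum (Suc k) m (r(Suc k := j))
       = (shape_sum k m r - exp (- L) * shape_sum k (iadd m (d (Suc k) j)) r) * qint L (Z (Suc k) m j)"
proof -
  let ?X = "\<lambda>i. Z i m (r i)" and ?X' = "\<lambda>i. Z i (iadd m (d (Suc k) j)) (r i)"
    and ?Y = "\<lambda>i. Z i m ((r(Suc k := j)) i)"
  have X': "?X' i = (if i = k then ?X i - 1 else ?X i)" if "1 \<le> i" "i \<le> k" for i
    using Z_shift_Suc_on_path[OF r k(2) that j(1) m] j(2) by simp
  note shape = path_shape_Suc_not_rel[of k r j, OF k(1) j(2)]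
  have "shape_sum (Suc k) m (r(Suc k := j)) = (if path_shape k k r then shape_coeff L (Suc k) ?Y (Suc k) else 0)"
    unfolding shape_sum_def using shape by (simp add: sum.neutral)
  also have "\<dots> = (if path_shape k k r then shape_coeff L k ?X k - exp (- L) * shape_coeff L k ?X' k else 0)
      * qint L (?Y (Suc k))"
    using shape_coeff_decrement_last_self[of k ?X' ?X ?Y, OF X' _ k(1) q_square] by simp
  also have "(if path_shape k k r then shape_coeff L k ?X k - exp (- L) * shape_coeff L k ?X' k else 0)
      = (\<Sum>s\<in>{1..k}. if path_shape k s r then shape_coeff L k ?X s - exp (- L) * shape_coeff L k ?X' s else 0)"
  proof -
    have "(\<Sum>s\<in>{1..<k}. if path_shape k s r then shape_coeff L k ?X s - exp (- L) * shape_coeff L k ?X' s else 0) = 0"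
      using shape_coeff_decrement_last[of k ?X' ?X, OF X'] by (intro sum.neutral) auto
    then show ?thesis using k(1) by (simp add: sum.last_plus)
  qed
  also have "\<dots> = shape_sum k m r - exp (- L) * shape_sum k (iadd m (d (Suc k) j)) r"
    unfolding shape_sum_def by (simp add: sum_distrib_left sum_subtractf[symmetric] if_distrib cong: if_cong)
  finally show ?thesis by (simp add: fun_upd_def)
qed

lemma shape_sum_Suc:
  assumes r: "r \<in> paths k" and k: "1 \<le> k" "Suc k \<le> n" and j: "j \<in> J (Suc k)"
    and m: "supported n m"
  shows "shape_sum (Suc k) m (r(Suc k := j))
       = shape_sum k m r * qint L (Z (Suc k) (iadd m (path_shift k r)) j)
         - exp (- L) * qint L (Z (Suc k) m j) * shape_sum k (iadd m (d (Suc k) j)) r"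
proof (cases "R (r k) j")
  case True
  let ?Y = "Z (Suc k) m j"
  have "shape_sum k m r * qint L (?Y - 1) - exp (- L) * qint L ?Y * shape_sum k m r
      = shape_sum k m r * (qint L (?Y - 1) - exp (- L) * qint L ?Y)"
    by (simp add: algebra_simps)
  then show ?thesis
    using shape_sum_Suc_rel[OF r k j True m] Z_path_shift[OF r k(2,1) j m] True
    by (simp add: qint_pred_sub_qint[OF q_square])
next
  case False
  then show ?thesis
    using shape_sum_Suc_not_rel[OF r k j False m] Z_path_shift[OF r k(2,1) j m]
    by (simp add: algebra_simps)
qed

lemma T_vbas_sum:
  assumes "p \<in> {1..n}" and "\<And>r. r \<in> P \<Longrightarrow> supported n (iadd m (D r))"
  shows "T p (\<lambda>x. \<Sum>r\<in>P. C r * vbas n l (iadd m (D r)) x)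
       = (\<lambda>x. \<Sum>r\<in>P. \<Sum>j\<in>J p. C r * (w p j * qint L (Z p (iadd m (D r)) j))
                                      * vbas n l (iadd (iadd m (D r)) (d p j)) x)"
  using assms by (simp add: lin_op_sum[OF lin_op_T] T_vbas sum_distrib_left mult.assoc cong: sum.cong)

lemma shape_sum_1: "shape_sum (Suc 0) m ((\<lambda>_. 0)(Suc 0 := j)) = qint L (Z (Suc 0) m j)"
  by (simp add: shape_sum_def path_shape_def shape_coeff_def balance_def qpow_def)

lemma nest_up_vbas:
  assumes "k \<in> {1..n}" and "supported n m"
  shows "nest_up (exp (- L)) T k (vbas n l m)
       = (\<lambda>x. \<Sum>r\<in>paths k. path_weight k r * shape_sum k m r * vbas n l (iadd m (path_shift k r)) x)"
  using assms
proof (induction k arbitrary: m)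
  case 0 then show ?case by simp
next
  case (Suc k)
  show ?case
  proof (cases "k = 0")
    case True
    then show ?thesis
      using T_vbas[of "Suc 0" m] Suc.prems
      by (simp add: sum_paths_Suc paths_0 path_weight_def path_shift_def shape_sum_1)
  next
    case False
    then have k: "1 \<le> k" "Suc k \<le> n" using Suc.prems by auto
    let ?q = "exp (- L)" and ?N = "nest_up (exp (- L)) T k"
    let ?c = "\<lambda>m r. path_weight k r * shape_sum k m r"
    have IH: "\<And>m'. supported n m' \<Longrightarrow> ?N (vbas n l m')
        = (\<lambda>x. \<Sum>r\<in>paths k. ?c m' r * vbas n l (iadd m' (path_shift k r)) x)"
      using Suc.IH k by auto
    have shift: "supported n (iadd m (path_shift k r))" if "r \<in> paths k" for r
      using Suc.prems k that by (intro supported_iadd supported_path_shift[of r k]) auto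
    have step: "supported n (iadd m (d (Suc k) j))" if "j \<in> J (Suc k)" for j
      using Suc.prems k that by (intro supported_iadd supported_d) auto
    have T_N: "T (Suc k) (?N (vbas n l m)) = (\<lambda>x. \<Sum>r\<in>paths k. \<Sum>j\<in>J (Suc k).
        ?c m r * (w (Suc k) j * qint L (Z (Suc k) (iadd m (path_shift k r)) j))
        * vbas n l (iadd m (path_shift (Suc k) (r(Suc k := j)))) x)"
      unfolding IH[OF Suc.prems(2)] iadd_path_shift_Suc(1) using k shift by (intro T_vbas_sum) auto
    have N_T: "?N (T (Suc k) (vbas n l m)) = (\<lambda>x. \<Sum>r\<in>paths k. \<Sum>j\<in>J (Suc k).
        (w (Suc k) j * qint L (Z (Suc k) m j)) * ?c (iadd m (d (Suc k) j)) r
        * vbas n l (iadd m (path_shift (Suc k) (r(Suc k := j)))) x)"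
    proof -
      have "?N (T (Suc k) (vbas n l m)) = (\<lambda>x. \<Sum>j\<in>J (Suc k). (w (Suc k) j * qint L (Z (Suc k) m j))
          * ?N (vbas n l (iadd m (d (Suc k) j))) x)"
        using T_vbas[of "Suc k" m] k Suc.prems lin_op_sum[OF lin_op_nest_up[OF lin_op_T]] by simp
      also have "\<dots> = (\<lambda>x. \<Sum>j\<in>J (Suc k). \<Sum>r\<in>paths k. (w (Suc k) j * qint L (Z (Suc k) m j))
          * ?c (iadd m (d (Suc k) j)) r * vbas n l (iadd (iadd m (d (Suc k) j)) (path_shift k r)) x)"
        using IH step by (simp add: sum_distrib_left mult.assoc cong: sum.cong)
      also have "\<dots> = (\<lambda>x. \<Sum>r\<in>paths k. \<Sum>j\<in>J (Suc k). (w (Suc k) j * qint L (Z (Suc k) m j))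
          * ?c (iadd m (d (Suc k) j)) r * vbas n l (iadd m (path_shift (Suc k) (r(Suc k := j)))) x)"
        unfolding iadd_path_shift_Suc(2) by (subst sum.swap) simp
      finally show ?thesis .
    qed
    have "nest_up ?q T (Suc k) (vbas n l m) = qcomm ?q (T (Suc k)) ?N (vbas n l m)"
      using k by (cases k) auto
    also have "\<dots> = (\<lambda>x. \<Sum>r\<in>paths k. \<Sum>j\<in>J (Suc k). path_weight (Suc k) (r(Suc k := j))
        * shape_sum (Suc k) m (r(Suc k := j)) * vbas n l (iadd m (path_shift (Suc k) (r(Suc k := j)))) x)"
      unfolding qcomm_def T_N N_T path_weight_Suc
      by (simp add: shape_sum_Suc[OF _ k _ Suc.prems(2)] sum_subtractf[symmetric] sum_distrib_left
          algebra_simps cong: sum.cong)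
    also have "\<dots> = (\<lambda>x. \<Sum>r\<in>paths (Suc k). path_weight (Suc k) r * shape_sum (Suc k) m r
        * vbas n l (iadd m (path_shift (Suc k) r)) x)"
      by (simp add: sum_paths_Suc)
    finally show ?thesis .
  qed
qed

end

section \<open>The Schnizer representation\<close>

lemma cadd_red:
  assumes "supported n m"
  shows "cadd (red n l m) b = (\<lambda>i j. cadd m b i j - of_nat l * of_int (m i j div int l))"
proof -
  have "cadd (red n l m) b i j = cadd m b i j - of_nat l * of_int (m i j div int l)" for i j
  proof (cases "valid n i j")
    case True
    have "m i j mod int l = m i j - int l * (m i j div int l)" by (simp add: minus_div_mult_eq_mod[symmetric])
    then show ?thesis using True by (simp add: cadd_def red_def)
  next
    case False then show ?thesis using assms by (simp add: cadd_def red_def supported_def)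
  qed
  then show ?thesis by auto
qed

lemma Mf_add: "Mf (\<lambda>i j. x i j + y i j) k j = Mf x k j + Mf y k j"
  by (simp add: Mf_def sum.distrib[symmetric] algebra_simps)

lemma sum_diff_scale:
  "(\<Sum>q\<in>S. (f q - c * g q) - (f' q - c * g' q)) = (\<Sum>q\<in>S. f q - f' q) - c * (\<Sum>q\<in>S. g q - g' q)"
  for f f' g g' :: "nat \<Rightarrow> complex"
  by (induct S rule: infinite_finite_induct) (simp_all add: algebra_simps)

lemma Mf_diff_scale: "Mf (\<lambda>i j. x i j - c * y i j) k j = Mf x k j - c * Mf y k j"
  unfolding Mf_def sum_diff_scale by (simp add: algebra_simps)

lemma Mf_of_int: "Mf (\<lambda>i j. of_int (t i j)) k j \<in> \<int>"
  unfolding Mf_def by (intro Ints_add Ints_sum Ints_diff) auto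

lemma Nf_add: "Nf n (\<lambda>i j. x i j + y i j) k j = Nf n x k j + Nf n y k j"
  by (simp add: Nf_def)

lemma Nf_diff_scale: "Nf n (\<lambda>i j. x i j - c * y i j) k j = Nf n x k j - c * Nf n y k j"
  by (simp add: Nf_def algebra_simps)

lemma Nf_of_int: "Nf n (\<lambda>i j. of_int (t i j)) k j \<in> \<int>"
  by (simp add: Nf_def)

lemma Mf_cadd_iadd: "Mf (cadd (iadd m u) b) k j = Mf (cadd m b) k j + Mf (\<lambda>i j. of_int (u i j)) k j"
  unfolding cadd_iadd Mf_add ..

lemma Nf_cadd_iadd: "Nf n (cadd (iadd m u) b) k j = Nf n (cadd m b) k j + Nf n (\<lambda>i j. of_int (u i j)) k j"
  unfolding cadd_iadd Nf_add ..

definition KL_exponent :: "nat \<Rightarrow> cvec \<Rightarrow> (nat \<Rightarrow> complex) \<Rightarrow> nat \<Rightarrow> idx \<Rightarrow> complex" where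
  "KL_exponent n b lam i m = (\<Sum>k\<in>{i..n}. cadd m b i k) - lamLam n lam i"

text \<open>The operators are defined through their action on the representatives \<open>red n l m\<close>; since all
  coefficients are \<open>l\<close>-periodic in the entries of \<open>m\<close> (\<open>q\<^sup>l = 1\<close>), the same formulas hold for
  every supported \<open>m\<close>.\<close>

context
  fixes n l :: nat and L :: complex and a b :: cvec and lam :: "nat \<Rightarrow> complex"
  assumes l_pos: "l > 0" and root: "exp L ^ l = 1"
begin

lemma rhoF_vbas:
  assumes "supported n m"
  shows "rhoF n l L a b lam i (vbas n l m) =
    (\<lambda>x. \<Sum>j\<in>{i..n}. a i j * qint L (Mf (cadd m b) i j - lam i) * vbas n l (iadd m (uvec i j)) x)"
proof -
  have "qint L (Mf (cadd (red n l m) b) i j - lam i) = qint L (Mf (cadd m b) i j - lam i)" for j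
  proof -
    have "Mf (cadd (red n l m) b) i j - lam i
        = (Mf (cadd m b) i j - lam i) + of_nat l * (- Mf (\<lambda>i j. of_int (m i j div int l)) i j)"
      unfolding cadd_red[OF assms] Mf_diff_scale by simp
    then show ?thesis by (simp only: qint_periodic[OF root] Mf_of_int Ints_minus)
  qed
  then show ?thesis unfolding rhoF_def lin_vbas[OF l_pos] by simp
qed

lemma rhoE_vbas:
  assumes "supported n m"
  shows "rhoE n l L a b lam i (vbas n l m) =
    (\<lambda>x. \<Sum>j\<in>{1..i}. apow n a (alpha n i j) * qint L (Nf n (cadd m b) i j) * vbas n l (iadd m (alpha n i j)) x)"
proof -
  have "qint L (Nf n (cadd (red n l m) b) i j) = qint L (Nf n (cadd m b) i j)" for j
  proof -
    have "Nf n (cadd (red n l m) b) i j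
        = Nf n (cadd m b) i j + of_nat l * (- Nf n (\<lambda>i j. of_int (m i j div int l)) i j)"
      unfolding cadd_red[OF assms] Nf_diff_scale by simp
    then show ?thesis by (simp only: qint_periodic[OF root] Nf_of_int Ints_minus)
  qed
  then show ?thesis unfolding rhoE_def lin_vbas[OF l_pos] by simp
qed

lemma row_sum_cadd_red:
  assumes "supported n m"
  shows "(\<Sum>k\<in>{i..n}. cadd (red n l m) b i k)
       = (\<Sum>k\<in>{i..n}. cadd m b i k) - of_nat l * (\<Sum>k\<in>{i..n}. of_int (m i k div int l))"
  unfolding cadd_red[OF assms] by (simp add: sum_subtractf sum_distrib_left)

lemma rhoKL_vbas:
  assumes "supported n m"
  shows "rhoKL n l L a b lam i (vbas n l m) = (\<lambda>x. qpow L (- KL_exponent n b lam i m) * vbas n l m x)"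
    and "rhoKLinv n l L a b lam i (vbas n l m) = (\<lambda>x. qpow L (KL_exponent n b lam i m) * vbas n l m x)"
proof -
  define z :: complex where "z = - (\<Sum>k\<in>{i..n}. of_int (m i k div int l))"
  have z: "z \<in> \<int>" "- z \<in> \<int>" unfolding z_def by (intro Ints_minus Ints_sum Ints_of_int)+
  have e: "KL_exponent n b lam i (red n l m) = KL_exponent n b lam i m + of_nat l * z"
    unfolding KL_exponent_def row_sum_cadd_red[OF assms] z_def by (simp add: algebra_simps)
  then have e': "- KL_exponent n b lam i (red n l m) = - KL_exponent n b lam i m + of_nat l * - z" by simp
  have "qpow L (KL_exponent n b lam i (red n l m)) = qpow L (KL_exponent n b lam i m)"
    unfolding e by (rule qpow_periodic[OF root z(1)])
  moreover have "qpow L (- KL_exponent n b lam i (red n l m)) = qpow L (- KL_exponent n b lam i m)"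
    unfolding e' by (rule qpow_periodic[OF root z(2)])
  ultimately show "rhoKL n l L a b lam i (vbas n l m) = (\<lambda>x. qpow L (- KL_exponent n b lam i m) * vbas n l m x)"
    and "rhoKLinv n l L a b lam i (vbas n l m) = (\<lambda>x. qpow L (KL_exponent n b lam i m) * vbas n l m x)"
    unfolding rhoKL_def rhoKLinv_def lin_vbas[OF l_pos] by (simp_all add: KL_exponent_def)
qed

end

lemma of_int_uvec: "(of_int (uvec i j p q) :: complex) = (if p = i \<and> q = j then 1 else 0)"
  by (simp add: uvec_def)

lemma Mf_uvec_prev:
  assumes "1 \<le> k" "k \<le> i" "Suc k \<le> j"
  shows "Mf (\<lambda>p q. of_int (uvec k i p q)) (Suc k) j = - (if i < j then 1 else 0)"
proof -
  have "Mf (\<lambda>p q. of_int (uvec k i p q)) (Suc k) j = - (\<Sum>q\<in>{k..j-1}. if q = i then (1::complex) else 0)"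
    unfolding Mf_def of_int_uvec by (simp add: sum_negf)
  then show ?thesis using assms by auto
qed

lemma Mf_uvec_next:
  assumes "1 \<le> k" "Suc k \<le> t" "k \<le> i"
  shows "Mf (\<lambda>p q. of_int (uvec (Suc k) t p q)) k i = - (if i < t then 0 else 1)"
proof -
  have "k - 1 \<noteq> Suc k" by simp
  then have "Mf (\<lambda>p q. of_int (uvec (Suc k) t p q)) k i = - (\<Sum>q\<in>{k..i}. if q = t then (1::complex) else 0)"
    unfolding Mf_def of_int_uvec by (simp add: sum_negf)
  then show ?thesis using assms by auto
qed

lemma Mf_uvec_far:
  assumes "1 \<le> k" "p + 2 \<le> k \<or> k + 2 \<le> p"
  shows "Mf (\<lambda>p' q. of_int (uvec p t p' q)) k i = 0"
proof -
  have "k - 1 \<noteq> p" "k \<noteq> p" "Suc k \<noteq> p" using assms by auto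
  then show ?thesis unfolding Mf_def of_int_uvec by simp
qed

lemma alpha_eq:
  assumes "i \<le> n"
  shows "alpha n i j p q = (if q + i = n + p + 1 \<and> j \<le> p \<and> p + 1 \<le> i then 1 else 0)
                          - (if q + i = n + p \<and> j \<le> p \<and> p \<le> i then 1 else 0)"
proof -
  have "(\<Sum>k\<in>{j+1..i}. uvec (k-1) (n-i+k) p q)
      = (\<Sum>k\<in>{j+1..i}. if k = p + 1 then (if q + i = n + p + 1 then 1 else 0) else 0)"
    and "(\<Sum>k\<in>{j..i}. uvec k (n-i+k) p q) = (\<Sum>k\<in>{j..i}. if k = p then (if q + i = n + p then 1 else 0) else 0)"
    unfolding uvec_def using assms by (intro sum.cong; auto)+
  then show ?thesis unfolding alpha_def by (simp only: sum.delta finite_atLeastAtMost) auto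
qed

lemma Nf_alpha_prev:
  assumes "1 \<le> k" "Suc k \<le> n" "1 \<le> i" "i \<le> k" "1 \<le> j" "j \<le> Suc k"
  shows "Nf n (\<lambda>p q. of_int (alpha n k i p q)) (Suc k) j = - (if i < j then 1 else 0)"
  unfolding Nf_def using assms by (auto simp: alpha_eq)

lemma Nf_alpha_next:
  assumes "1 \<le> k" "Suc k \<le> n" "1 \<le> i" "i \<le> k" "1 \<le> j" "j \<le> Suc k"
  shows "Nf n (\<lambda>p q. of_int (alpha n (Suc k) j p q)) k i = - (if i < j then 0 else 1)"
  unfolding Nf_def using assms by (auto simp: alpha_eq)

lemma Nf_alpha_far:
  assumes "k \<le> n" "p \<le> n" "1 \<le> i" "i \<le> k" "p + 2 \<le> k \<or> k + 2 \<le> p"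
  shows "Nf n (\<lambda>p' q. of_int (alpha n p t p' q)) k i = 0"
  unfolding Nf_def using assms by (auto simp: alpha_eq)

lemma supported_uvec: "valid n i j \<Longrightarrow> supported n (uvec i j)"
  by (auto simp: supported_def uvec_def)

lemma supported_alpha: "i \<le> n \<Longrightarrow> 1 \<le> j \<Longrightarrow> supported n (alpha n i j)"
  by (auto simp: supported_def alpha_eq valid_def)

context
  fixes n l :: nat and L :: complex and a b :: cvec and lam :: "nat \<Rightarrow> complex"
  assumes l_pos: "l > 0" and root: "exp L ^ l = 1" and q_square: "exp L ^ 2 \<noteq> 1"
begin

lemma qcomm_chain_rhoF:
  "qcomm_chain n l L (rhoF n l L a b lam) (\<lambda>k. {k..n}) uvec a (\<lambda>k m j. Mf (cadd m b) k j - lam k) (<)"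
proof
  show "rhoF n l L a b lam k (vbas n l m) = (\<lambda>x. \<Sum>j\<in>{k..n}. a k j * qint L (Mf (cadd m b) k j - lam k) * vbas n l (iadd m (uvec k j)) x)"
    if "supported n m" for k m by (rule rhoF_vbas[OF l_pos root that])
  show "supported n (uvec k j)" if "k \<in> {1..n}" "j \<in> {k..n}" for k j
    using that by (intro supported_uvec) (auto simp: valid_def)
  show "Mf (cadd (iadd m (uvec k i)) b) (Suc k) j - lam (Suc k) = Mf (cadd m b) (Suc k) j - lam (Suc k) - (if i < j then 1 else 0)"
    if "1 \<le> k" "k < n" "i \<in> {k..n}" "j \<in> {Suc k..n}" for k i j m
    using that by (simp add: Mf_cadd_iadd Mf_uvec_prev)
  show "Mf (cadd (iadd m (uvec (Suc k) j)) b) k i - lam k = Mf (cadd m b) k i - lam k - (if i < j then 0 else 1)"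
    if "1 \<le> k" "k < n" "i \<in> {k..n}" "j \<in> {Suc k..n}" for k i j m
    using that by (simp add: Mf_cadd_iadd Mf_uvec_next)
  show "Mf (cadd (iadd m (uvec p j)) b) k i - lam k = Mf (cadd m b) k i - lam k"
    if "k \<in> {1..n}" "p + 2 \<le> k \<or> k + 2 \<le> p" for k p i j m
    using that by (simp add: Mf_cadd_iadd Mf_uvec_far)
qed (simp_all add: q_square rhoF_def lin_op_lin)

lemma qcomm_chain_rhoE:
  "qcomm_chain n l L (rhoE n l L a b lam) (\<lambda>k. {1..k}) (alpha n) (\<lambda>k j. apow n a (alpha n k j))
     (\<lambda>k m j. Nf n (cadd m b) k j) (<)"
proof
  show "rhoE n l L a b lam k (vbas n l m) = (\<lambda>x. \<Sum>j\<in>{1..k}. apow n a (alpha n k j) * qint L (Nf n (cadd m b) k j) * vbas n l (iadd m (alpha n k j)) x)"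
    if "supported n m" for k m by (rule rhoE_vbas[OF l_pos root that])
  show "supported n (alpha n k j)" if "k \<in> {1..n}" "j \<in> {1..k}" for k j
    using that by (intro supported_alpha) auto
  show "Nf n (cadd (iadd m (alpha n k i)) b) (Suc k) j = Nf n (cadd m b) (Suc k) j - (if i < j then 1 else 0)"
    if "1 \<le> k" "k < n" "i \<in> {1..k}" "j \<in> {1..Suc k}" for k i j m
    using that by (simp add: Nf_cadd_iadd Nf_alpha_prev)
  show "Nf n (cadd (iadd m (alpha n (Suc k) j)) b) k i = Nf n (cadd m b) k i - (if i < j then 0 else 1)"
    if "1 \<le> k" "k < n" "i \<in> {1..k}" "j \<in> {1..Suc k}" for k i j m
    using that by (simp add: Nf_cadd_iadd Nf_alpha_next)
  show "Nf n (cadd (iadd m (alpha n p j)) b) k i = Nf n (cadd m b) k i"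
    if "k \<in> {1..n}" "p \<in> {1..n}" "p + 2 \<le> k \<or> k + 2 \<le> p" "i \<in> {1..k}" for k p i j m
    using that by (simp add: Nf_cadd_iadd Nf_alpha_far)
qed (simp_all add: q_square rhoE_def lin_op_lin)

text \<open>The nests \<open>[X\<^sub>1,[X\<^sub>2,\<dots>,[X\<^sub>n\<^sub>-\<^sub>1,X\<^sub>n]\<^sub>q\<dots>]\<^sub>q]\<^sub>q\<close> of \<open>ev\<^sup>-\<close> are the nests of the
  reversed family, in which consecutive shifts interact through \<open>\<le>\<close> instead of \<open><\<close>.\<close>

lemma qcomm_chain_rhoF_rev:
  "qcomm_chain n l L (\<lambda>k. rhoF n l L a b lam (n + 1 - k)) (\<lambda>k. {n + 1 - k..n}) (\<lambda>k. uvec (n + 1 - k))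
     (\<lambda>k. a (n + 1 - k)) (\<lambda>k m j. Mf (cadd m b) (n + 1 - k) j - lam (n + 1 - k)) (\<le>)"
proof
  show "rhoF n l L a b lam (n + 1 - k) (vbas n l m) = (\<lambda>x. \<Sum>j\<in>{n + 1 - k..n}. a (n + 1 - k) j * qint L (Mf (cadd m b) (n + 1 - k) j - lam (n + 1 - k)) * vbas n l (iadd m (uvec (n + 1 - k) j)) x)"
    if "supported n m" for k m by (rule rhoF_vbas[OF l_pos root that])
  show "supported n (uvec (n + 1 - k) j)" if "k \<in> {1..n}" "j \<in> {n + 1 - k..n}" for k j
    using that by (intro supported_uvec) (auto simp: valid_def)
  show "Mf (cadd (iadd m (uvec (n + 1 - k) i)) b) (n + 1 - Suc k) j - lam (n + 1 - Suc k)
      = Mf (cadd m b) (n + 1 - Suc k) j - lam (n + 1 - Suc k) - (if i \<le> j then 1 else 0)"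
    if "1 \<le> k" "k < n" "i \<in> {n + 1 - k..n}" "j \<in> {n + 1 - Suc k..n}" for k i j m
  proof -
    have e: "n + 1 - k = Suc (n - k)" "n + 1 - Suc k = n - k" using that by auto
    show ?thesis unfolding e Mf_cadd_iadd using that Mf_uvec_next[of "n - k" i j] e by auto
  qed
  show "Mf (cadd (iadd m (uvec (n + 1 - Suc k) j)) b) (n + 1 - k) i - lam (n + 1 - k)
      = Mf (cadd m b) (n + 1 - k) i - lam (n + 1 - k) - (if i \<le> j then 0 else 1)"
    if "1 \<le> k" "k < n" "i \<in> {n + 1 - k..n}" "j \<in> {n + 1 - Suc k..n}" for k i j m
  proof -
    have e: "n + 1 - k = Suc (n - k)" "n + 1 - Suc k = n - k" using that by auto
    show ?thesis unfolding e Mf_cadd_iadd using that Mf_uvec_prev[of "n - k" j i] e by auto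
  qed
  show "Mf (cadd (iadd m (uvec (n + 1 - p) j)) b) (n + 1 - k) i - lam (n + 1 - k) = Mf (cadd m b) (n + 1 - k) i - lam (n + 1 - k)"
    if "k \<in> {1..n}" "p \<in> {1..n}" "p + 2 \<le> k \<or> k + 2 \<le> p" for k p i j m
  proof -
    have "Mf (\<lambda>p' q. of_int (uvec (n + 1 - p) j p' q)) (n + 1 - k) i = 0"
      by (rule Mf_uvec_far) (use that in auto)
    then show ?thesis by (simp add: Mf_cadd_iadd)
  qed
qed (simp_all add: q_square rhoF_def lin_op_lin)

lemma qcomm_chain_rhoE_rev:
  "qcomm_chain n l L (\<lambda>k. rhoE n l L a b lam (n + 1 - k)) (\<lambda>k. {1..n + 1 - k}) (\<lambda>k. alpha n (n + 1 - k))
     (\<lambda>k j. apow n a (alpha n (n + 1 - k) j)) (\<lambda>k m j. Nf n (cadd m b) (n + 1 - k) j) (\<le>)"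
proof
  show "rhoE n l L a b lam (n + 1 - k) (vbas n l m) = (\<lambda>x. \<Sum>j\<in>{1..n + 1 - k}. apow n a (alpha n (n + 1 - k) j) * qint L (Nf n (cadd m b) (n + 1 - k) j) * vbas n l (iadd m (alpha n (n + 1 - k) j)) x)"
    if "supported n m" for k m by (rule rhoE_vbas[OF l_pos root that])
  show "supported n (alpha n (n + 1 - k) j)" if "k \<in> {1..n}" "j \<in> {1..n + 1 - k}" for k j
    using that by (intro supported_alpha) auto
  show "Nf n (cadd (iadd m (alpha n (n + 1 - k) i)) b) (n + 1 - Suc k) j = Nf n (cadd m b) (n + 1 - Suc k) j - (if i \<le> j then 1 else 0)"
    if "1 \<le> k" "k < n" "i \<in> {1..n + 1 - k}" "j \<in> {1..n + 1 - Suc k}" for k i j m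
  proof -
    have e: "n + 1 - k = Suc (n - k)" "n + 1 - Suc k = n - k" using that by auto
    show ?thesis unfolding e Nf_cadd_iadd using that Nf_alpha_next[of "n - k" n j i] e by auto
  qed
  show "Nf n (cadd (iadd m (alpha n (n + 1 - Suc k) j)) b) (n + 1 - k) i = Nf n (cadd m b) (n + 1 - k) i - (if i \<le> j then 0 else 1)"
    if "1 \<le> k" "k < n" "i \<in> {1..n + 1 - k}" "j \<in> {1..n + 1 - Suc k}" for k i j m
  proof -
    have e: "n + 1 - k = Suc (n - k)" "n + 1 - Suc k = n - k" using that by auto
    show ?thesis unfolding e Nf_cadd_iadd using that Nf_alpha_prev[of "n - k" n j i] e by auto
  qed
  show "Nf n (cadd (iadd m (alpha n (n + 1 - p) j)) b) (n + 1 - k) i = Nf n (cadd m b) (n + 1 - k) i"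
    if "k \<in> {1..n}" "p \<in> {1..n}" "p + 2 \<le> k \<or> k + 2 \<le> p" "i \<in> {1..n + 1 - k}" for k p i j m
  proof -
    have "Nf n (\<lambda>p' q. of_int (alpha n (n + 1 - p) j p' q)) (n + 1 - k) i = 0"
      by (rule Nf_alpha_far) (use that in auto)
    then show ?thesis by (simp add: Nf_cadd_iadd)
  qed
qed (simp_all add: q_square rhoE_def lin_op_lin)

end

section \<open>Paths of a fixed shape\<close>

definition shape_paths :: "(nat \<Rightarrow> nat set) \<Rightarrow> nat \<Rightarrow> nat \<Rightarrow> (nat \<Rightarrow> nat) set" where
  "shape_paths J n s = {r. (\<forall>k. k \<notin> {1..n} \<longrightarrow> r k = 0) \<and> (\<forall>k\<in>{1..n}. r k \<in> J k) \<and> Rshape n s r}"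

definition reverse_path :: "nat \<Rightarrow> (nat \<Rightarrow> nat) \<Rightarrow> nat \<Rightarrow> nat" where
  "reverse_path n r = (\<lambda>i. if i \<in> {1..n} then r (n + 1 - i) else 0)"

lemma RFs_eq_shape_paths: "RFs n s = shape_paths (\<lambda>k. {k..n}) n s"
  unfolding RFs_def shape_paths_def by auto

lemma REs_eq_shape_paths: "REs n s = shape_paths (\<lambda>k. {1..k}) n s"
  unfolding REs_def shape_paths_def by auto

lemma reverse_path_reverse_path: "(\<forall>k. k \<notin> {1..n} \<longrightarrow> r k = 0) \<Longrightarrow> reverse_path n (reverse_path n r) = r"
  unfolding reverse_path_def by (auto simp: fun_eq_iff)

lemma inj_on_reverse_path: "inj_on (reverse_path n) (shape_paths J n s)"
  by (rule inj_on_inverseI[where g = "reverse_path n"]) (simp add: shape_paths_def reverse_path_reverse_path)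

lemma sum_reverse: "(\<Sum>i\<in>{1..n}. f i) = (\<Sum>i\<in>{1..n}. f (n + 1 - i))" for n :: nat
  by (rule sum.reindex_bij_witness[where i = "\<lambda>i. n + 1 - i" and j = "\<lambda>i. n + 1 - i"]) auto

lemma prod_reverse: "(\<Prod>i\<in>{1..n}. f i) = (\<Prod>i\<in>{1..n}. f (n + 1 - i))" for n :: nat
  by (rule prod.reindex_bij_witness[where i = "\<lambda>i. n + 1 - i" and j = "\<lambda>i. n + 1 - i"]) auto

lemma balance_reverse:
  assumes "\<And>k. k \<in> {1..n} \<Longrightarrow> X' k = X (n + 1 - k)" and "s \<in> {1..n}"
  shows "balance n X' (n + 1 - s) = - balance n X s"
proof -
  have "(\<Sum>k\<in>{1..<n + 1 - s}. X' k) = (\<Sum>i\<in>{s<..n}. X i)"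
    by (rule sum.reindex_bij_witness[where i = "\<lambda>i. n + 1 - i" and j = "\<lambda>i. n + 1 - i"]) (use assms in auto)
  moreover have "(\<Sum>k\<in>{n + 1 - s<..n}. X' k) = (\<Sum>i\<in>{1..<s}. X i)"
    by (rule sum.reindex_bij_witness[where i = "\<lambda>i. n + 1 - i" and j = "\<lambda>i. n + 1 - i"]) (use assms in auto)
  ultimately show ?thesis by (simp add: balance_def)
qed

lemma shape_coeff_reverse:
  assumes "\<And>k. k \<in> {1..n} \<Longrightarrow> X' k = X (n + 1 - k)" and "s \<in> {1..n}"
  shows "shape_coeff L n X' (n + 1 - s) = (-1) ^ (s - 1) * qpow L (- balance n X s - of_nat (n - s)) * qint L (X s)"
proof -
  have "n + 1 - s \<in> {1..n}" "n + 1 - (n + 1 - s) = s" using assms(2) by auto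
  then have "X' (n + 1 - s) = X s" "n - (n + 1 - s) = s - 1" using assms(1)[of "n + 1 - s"] by auto
  moreover have "- balance n X s - of_nat (n + 1 - s) + 1 = - balance n X s - of_nat (n - s)"
    using assms(2) by simp
  moreover have "balance n X' (n + 1 - s) = - balance n X s" by (rule balance_reverse) (use assms in auto)
  ultimately show ?thesis unfolding shape_coeff_def by simp
qed

context qcomm_chain
begin

lemma sum_paths_by_shape:
  "(\<Sum>r\<in>paths k. path_weight k r * shape_sum k m r * g r)
   = (\<Sum>s\<in>{1..k}. \<Sum>r\<in>{r \<in> paths k. path_shape k s r}. path_weight k r * shape_coeff L k (\<lambda>i. Z i m (r i)) s * g r)"
proof -
  have "(\<Sum>r\<in>paths k. path_weight k r * shape_sum k m r * g r)
      = (\<Sum>r\<in>paths k. \<Sum>s\<in>{1..k}. if path_shape k s r then path_weight k r * shape_coeff L k (\<lambda>i. Z i m (r i)) s * g r else 0)"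
    unfolding shape_sum_def by (simp add: sum_distrib_left sum_distrib_right if_distrib mult_ac cong: if_cong)
  also have "\<dots> = (\<Sum>s\<in>{1..k}. \<Sum>r\<in>paths k. if path_shape k s r then path_weight k r * shape_coeff L k (\<lambda>i. Z i m (r i)) s * g r else 0)"
    by (rule sum.swap)
  also have "\<dots> = (\<Sum>s\<in>{1..k}. \<Sum>r\<in>{r \<in> paths k. path_shape k s r}. path_weight k r * shape_coeff L k (\<lambda>i. Z i m (r i)) s * g r)"
    by (simp add: sum.inter_filter[OF finite_paths])
  finally show ?thesis .
qed

lemma shape_set_less:
  assumes "R = (<)"
  shows "{r \<in> paths n. path_shape n s r} = shape_paths J n s"
  using assms unfolding paths_def path_shape_def shape_paths_def Rshape_def by (auto simp: not_less)

lemma path_shape_reverse_le: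
  assumes "R = (\<le>)" and s: "1 \<le> s" "s \<le> n"
  shows "path_shape n (n + 1 - s) (reverse_path n r) \<longleftrightarrow> Rshape n s r"
proof -
  have rev: "reverse_path n r i = r (n - i + 1)" "reverse_path n r (Suc i) = r (n - i)"
    if "1 \<le> i" "i < n" for i
    using that by (auto simp: reverse_path_def Suc_diff_le)
  show ?thesis
  proof
    assume h: "path_shape n (n + 1 - s) (reverse_path n r)"
    have h1: "\<And>i. 1 \<le> i \<Longrightarrow> i < n + 1 - s \<Longrightarrow> \<not> reverse_path n r i \<le> reverse_path n r (Suc i)"
      and h2: "\<And>i. n + 1 - s \<le> i \<Longrightarrow> i < n \<Longrightarrow> reverse_path n r i \<le> reverse_path n r (Suc i)"
      using h[unfolded path_shape_def] assms(1) by auto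
    have "r (k + 1) \<le> r k" if "1 \<le> k" "k < s" for k
      using h2[of "n - k"] rev[of "n - k"] that s by auto
    moreover have "r k < r (k + 1)" if "s \<le> k" "k < n" for k
    proof -
      have "1 \<le> n - k" "n - k < n + 1 - s" using that by auto
      then show ?thesis using h1[of "n - k"] rev[of "n - k"] that s by auto
    qed
    ultimately show "Rshape n s r" unfolding Rshape_def by auto
  next
    assume h: "Rshape n s r"
    have "\<not> reverse_path n r i \<le> reverse_path n r (Suc i)" if "1 \<le> i" "i < n + 1 - s" for i
      using h rev[of i] that s unfolding Rshape_def by (auto simp: not_le)
    moreover have "reverse_path n r i \<le> reverse_path n r (Suc i)" if "n + 1 - s \<le> i" "i < n" for i
    proof -
      have "1 \<le> n - i" "n - i < s" "1 \<le> i" using that s by auto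
      then show ?thesis using h rev[of i] unfolding Rshape_def by auto
    qed
    ultimately show "path_shape n (n + 1 - s) (reverse_path n r)"
      unfolding path_shape_def unfolding assms(1) by auto
  qed
qed

lemma shape_set_reverse_le:
  assumes "R = (\<le>)" and J: "J = (\<lambda>k. J' (n + 1 - k))" and s: "1 \<le> s" "s \<le> n"
  shows "{r \<in> paths n. path_shape n (n + 1 - s) r} = reverse_path n ` shape_paths J' n s"
proof (rule set_eqI, rule iffI)
  fix r' assume r': "r' \<in> {r \<in> paths n. path_shape n (n + 1 - s) r}"
  then have z: "\<forall>k. k \<notin> {1..n} \<longrightarrow> r' k = 0" by (auto simp: paths_def)
  let ?r = "reverse_path n r'"
  have "?r k \<in> J' k" if "k \<in> {1..n}" for k
  proof -
    have "n + 1 - k \<in> {1..n}" using that by auto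
    then have "r' (n + 1 - k) \<in> J (n + 1 - k)" using r' by (auto simp: paths_def)
    then show ?thesis using that by (simp add: reverse_path_def J)
  qed
  moreover have "Rshape n s ?r"
    using r' path_shape_reverse_le[OF assms(1) s, of ?r] reverse_path_reverse_path[OF z] by simp
  ultimately have "?r \<in> shape_paths J' n s" by (auto simp: shape_paths_def reverse_path_def)
  then show "r' \<in> reverse_path n ` shape_paths J' n s"
    using reverse_path_reverse_path[OF z] by (metis image_eqI)
next
  fix r' assume "r' \<in> reverse_path n ` shape_paths J' n s"
  then obtain r where r: "r \<in> shape_paths J' n s" and r': "r' = reverse_path n r" by blast
  have "r (n + 1 - i) \<in> J' (n + 1 - i)" if "i \<in> {1..n}" for i
  proof -
    have "n + 1 - i \<in> {1..n}" using that by auto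
    then show ?thesis using r unfolding shape_paths_def by blast
  qed
  then have "r' \<in> paths n" unfolding r' paths_def unfolding J reverse_path_def by auto
  moreover have "path_shape n (n + 1 - s) r'"
    using r path_shape_reverse_le[OF assms(1) s] unfolding r' shape_paths_def by auto
  ultimately show "r' \<in> {r \<in> paths n. path_shape n (n + 1 - s) r}" by blast
qed

lemma sum_paths_shape_less:
  assumes "R = (<)"
  shows "(\<Sum>r\<in>paths n. path_weight n r * shape_sum n m r * g r)
       = (\<Sum>s\<in>{1..n}. \<Sum>r\<in>shape_paths J n s. path_weight n r * shape_coeff L n (\<lambda>i. Z i m (r i)) s * g r)"
  unfolding sum_paths_by_shape shape_set_less[OF assms] ..

lemma sum_paths_shape_reverse_le:
  assumes "R = (\<le>)" and "J = (\<lambda>k. J' (n + 1 - k))"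
  shows "(\<Sum>r\<in>paths n. path_weight n r * shape_sum n m r * g r)
       = (\<Sum>s\<in>{1..n}. \<Sum>r\<in>shape_paths J' n s. path_weight n (reverse_path n r)
            * shape_coeff L n (\<lambda>i. Z i m (reverse_path n r i)) (n + 1 - s) * g (reverse_path n r))"
proof -
  have "(\<Sum>r\<in>paths n. path_weight n r * shape_sum n m r * g r)
      = (\<Sum>s\<in>{1..n}. \<Sum>r\<in>{r \<in> paths n. path_shape n (n + 1 - s) r}.
           path_weight n r * shape_coeff L n (\<lambda>i. Z i m (r i)) (n + 1 - s) * g r)"
    unfolding sum_paths_by_shape by (rule sum_reverse)
  also have "\<dots> = (\<Sum>s\<in>{1..n}. \<Sum>r\<in>shape_paths J' n s. path_weight n (reverse_path n r)
            * shape_coeff L n (\<lambda>i. Z i m (reverse_path n r i)) (n + 1 - s) * g (reverse_path n r))"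
  proof (rule sum.cong[OF refl])
    fix s assume "s \<in> {1..n}"
    then have "{r \<in> paths n. path_shape n (n + 1 - s) r} = reverse_path n ` shape_paths J' n s"
      using shape_set_reverse_le[OF assms] by simp
    then show "(\<Sum>r\<in>{r \<in> paths n. path_shape n (n + 1 - s) r}.
           path_weight n r * shape_coeff L n (\<lambda>i. Z i m (r i)) (n + 1 - s) * g r)
        = (\<Sum>r\<in>shape_paths J' n s. path_weight n (reverse_path n r)
            * shape_coeff L n (\<lambda>i. Z i m (reverse_path n r i)) (n + 1 - s) * g (reverse_path n r))"
      by (simp add: sum.reindex[OF inj_on_reverse_path])
  qed
  finally show ?thesis .
qed
end

section \<open>Exponent bookkeeping\<close>

lemma sum_atLeastLessThan_eq_lessThan:
  fixes a b :: nat
  assumes "\<And>p. p < a \<Longrightarrow> f p = 0"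
  shows "(\<Sum>p\<in>{a..<b}. f p) = (\<Sum>p<b. f p)"
  using assms by (intro sum.mono_neutral_left) auto

lemma supported_zero_below:
  assumes "supported n c"
  shows "p < i \<Longrightarrow> c i p = 0" and "c 0 p = 0"
  using assms by (auto simp: supported_def valid_def)

lemma prefix_sum_diag: "supported n c \<Longrightarrow> (\<Sum>p<Suc k. c k p) = c k k"
  by (simp add: sum.neutral supported_zero_below(1))

lemma Mf_prefix_sums:
  assumes "supported n c" and "1 \<le> i" "i \<le> j"
  shows "Mf c i j = (\<Sum>p<j. c i p) - (\<Sum>p<j. c (i - 1) p) + (\<Sum>p<Suc j. c i p) - (\<Sum>p<Suc j. c (Suc i) p)"
proof -
  have "{i - 1..j - 1} = {i - 1..<j}" "{i..j} = {i..<Suc j}" using assms by auto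
  moreover have "(\<Sum>p\<in>{i - 1..<j}. c i p) = (\<Sum>p<j. c i p)"
    "(\<Sum>p\<in>{i - 1..<j}. c (i - 1) p) = (\<Sum>p<j. c (i - 1) p)"
    "(\<Sum>p\<in>{i..<Suc j}. c i p) = (\<Sum>p<Suc j. c i p)"
    "(\<Sum>p\<in>{i..<Suc j}. c (Suc i) p) = (\<Sum>p<Suc j. c (Suc i) p)"
    by (rule sum_atLeastLessThan_eq_lessThan; simp add: supported_zero_below(1)[OF assms(1)])+
  ultimately show ?thesis
    unfolding Mf_def sum_subtractf by simp
qed

text \<open>\<open>M\<^sub>i\<^sub>,\<^sub>j\<close> is a signed combination of four prefix sums of rows \<open>i - 1, i, i + 1\<close>, so a sum
  of them along a path telescopes.\<close>

lemma sum_Mf_telescope: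
  fixes c :: cvec
  assumes "supported n c" and "\<And>i. i \<in> {1..t} \<Longrightarrow> i \<le> \<rho> i"
  defines "P \<equiv> \<lambda>k j. \<Sum>p<j. c k p"
  shows "(\<Sum>i\<in>{1..t}. Mf c i (\<rho> i))
       = (\<Sum>k\<in>{1..t}. P k (\<rho> k) - P k (\<rho> (Suc k))) + (\<Sum>k\<in>{1..t}. P k (Suc (\<rho> k)) - P k (Suc (\<rho> (k - 1))))
         + P 1 (Suc (\<rho> 0)) + P t (\<rho> (Suc t)) - P (Suc t) (Suc (\<rho> t))"
  using assms(2)
proof (induction t)
  case 0
  have "P 0 j = 0" for j using supported_zero_below(2)[OF assms(1)] by (simp add: P_def)
  then show ?case by simp
next
  case (Suc t)
  have Mf: "Mf c (Suc t) (\<rho> (Suc t)) = P (Suc t) (\<rho> (Suc t)) - P t (\<rho> (Suc t))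
      + P (Suc t) (Suc (\<rho> (Suc t))) - P (Suc (Suc t)) (Suc (\<rho> (Suc t)))"
    using Mf_prefix_sums[OF assms(1), of "Suc t" "\<rho> (Suc t)"] Suc.prems by (simp add: P_def)
  have split: "(\<Sum>i\<in>{1..Suc t}. f i) = (\<Sum>i\<in>{1..t}. f i) + f (Suc t)" for f :: "nat \<Rightarrow> complex"
    by simp
  have IH: "(\<Sum>i\<in>{1..t}. Mf c i (\<rho> i))
      = (\<Sum>k\<in>{1..t}. P k (\<rho> k) - P k (\<rho> (Suc k))) + (\<Sum>k\<in>{1..t}. P k (Suc (\<rho> k)) - P k (Suc (\<rho> (k - 1))))
        + P 1 (Suc (\<rho> 0)) + P t (\<rho> (Suc t)) - P (Suc t) (Suc (\<rho> t))"
    by (rule Suc.IH) (use Suc.prems in auto)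
  show ?case unfolding split IH Mf by (simp add: algebra_simps)
qed

lemma RFs_tail:
  assumes r: "r \<in> RFs n s" and s: "1 \<le> s" and i: "s \<le> i" "i \<le> n"
  shows "r i = i"
proof -
  have bounds: "\<And>k. k \<in> {1..n} \<Longrightarrow> k \<le> r k \<and> r k \<le> n"
    and inc: "\<And>k. s \<le> k \<Longrightarrow> k < n \<Longrightarrow> r k < r (Suc k)"
    using r unfolding RFs_def Rshape_def by auto
  have "r (n - d) \<le> n - d" if "d \<le> n - s" for d
    using that
  proof (induction d)
    case 0 then show ?case using bounds[of n] s i by auto
  next
    case (Suc d)
    then have "r (n - Suc d) < r (Suc (n - Suc d))" "Suc (n - Suc d) = n - d" using inc[of "n - Suc d"] s by auto
    then show ?case using Suc by auto
  qed
  from this[of "n - i"] bounds[of i] i s show ?thesis by auto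
qed

lemma RFs_props:
  assumes "r \<in> RFs n s" and "1 \<le> s" "s \<le> n"
  shows "r s = s" and "\<And>k. k \<in> {1..n} \<Longrightarrow> k \<le> r k \<and> r k \<le> n"
    and "\<And>k. 1 \<le> k \<Longrightarrow> k < s \<Longrightarrow> r (Suc k) \<le> r k"
  using RFs_tail[OF assms(1,2), of s] assms unfolding RFs_def Rshape_def by auto

lemma CE_eq:
  fixes c :: cvec
  assumes c: "supported n c" and r: "r \<in> RFs n s" and s: "1 \<le> s" "s \<le> n"
  shows "CE n c r s = c s s - (\<Sum>k\<in>{1..n}. c 1 k) + (\<Sum>i\<in>{1..<s}. Mf c i (r i))"
proof -
  note rs = RFs_props[OF r s]
  define P where "P k j = (\<Sum>p<j. c k p)" for k j
  define \<rho> where "\<rho> k = (if k = 0 then n else r k)" for k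
  obtain t where t: "s = Suc t" using s by (cases s) auto
  have \<rho>_ge: "i \<le> \<rho> i" if "i \<in> {1..t}" for i using rs(2)[of i] that t s by (auto simp: \<rho>_def)
  have interval: "(\<Sum>p\<in>{a..<b}. c k p) = P k b - P k a" if "a \<le> b" for a b k
    unfolding P_def by (metis sum.atLeastLessThan_concat[OF le0 that] add_diff_cancel_left' atLeast0LessThan)
  have A: "(\<Sum>p\<in>{r (k + 1)..r k - 1}. c k p) = P k (r k) - P k (r (Suc k))" if "k \<in> {1..t}" for k
  proof -
    have "1 \<le> r k" "r (Suc k) \<le> r k" using rs(2,3)[of k] that t s by auto
    moreover have "{r (k + 1)..r k - 1} = {r (Suc k)..<r k}" using \<open>1 \<le> r k\<close> by auto
    ultimately show ?thesis using interval[of "r (Suc k)" "r k" k] by simp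
  qed
  have B: "(\<Sum>p\<in>{r k + 1..\<rho> (k - 1)}. c k p) = P k (Suc (\<rho> (k - 1))) - P k (Suc (r k))" if "k \<in> {1..s}" for k
  proof -
    have "r k \<le> \<rho> (k - 1)" using rs(2)[of k] rs(3)[of "k - 1"] that s by (cases "k = 1") (auto simp: \<rho>_def)
    moreover have "{r k + 1..\<rho> (k - 1)} = {Suc (r k)..<Suc (\<rho> (k - 1))}" by auto
    ultimately show ?thesis using interval[of "Suc (r k)" "Suc (\<rho> (k - 1))" k] by simp
  qed
  have "P k (Suc k) = c k k" for k
    unfolding P_def by (rule prefix_sum_diag[OF c])
  then have P_diag: "P s (Suc s) = c s s" "P t s = c t t" using t by auto
  have "CE n c r s = c t t + (\<Sum>k\<in>{1..t}. \<Sum>p\<in>{r (k + 1)..r k - 1}. c k p)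
      - (\<Sum>k\<in>{1..s}. \<Sum>p\<in>{r k + 1..\<rho> (k - 1)}. c k p)"
    unfolding CE_def Let_def \<rho>_def using t by simp
  also have "\<dots> = c t t + (\<Sum>k\<in>{1..t}. P k (r k) - P k (r (Suc k)))
      - (\<Sum>k\<in>{1..s}. P k (Suc (\<rho> (k - 1))) - P k (Suc (r k)))"
    using sum.cong[OF refl A, of "{1..t}"] sum.cong[OF refl B, of "{1..s}"] by simp
  also have "(\<Sum>k\<in>{1..t}. P k (r k) - P k (r (Suc k))) = (\<Sum>k\<in>{1..t}. P k (\<rho> k) - P k (\<rho> (Suc k)))"
    by (simp add: \<rho>_def)
  also have "(\<Sum>k\<in>{1..s}. P k (Suc (\<rho> (k - 1))) - P k (Suc (r k)))
      = - (\<Sum>k\<in>{1..t}. P k (Suc (\<rho> k)) - P k (Suc (\<rho> (k - 1)))) + (P s (Suc (\<rho> t)) - P s (Suc s))"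
  proof -
    have "(\<Sum>k\<in>{1..t}. P k (Suc (\<rho> (k - 1))) - P k (Suc (r k)))
        = - (\<Sum>k\<in>{1..t}. P k (Suc (\<rho> k)) - P k (Suc (\<rho> (k - 1))))"
      unfolding sum_negf[symmetric] by (intro sum.cong) (auto simp: \<rho>_def)
    then show ?thesis using t rs(1) by simp
  qed
  finally have CE: "CE n c r s = c t t + (\<Sum>k\<in>{1..t}. P k (\<rho> k) - P k (\<rho> (Suc k)))
      + (\<Sum>k\<in>{1..t}. P k (Suc (\<rho> k)) - P k (Suc (\<rho> (k - 1)))) - P s (Suc (\<rho> t)) + P s (Suc s)"
    by (simp add: algebra_simps)
  have M: "(\<Sum>i\<in>{1..<s}. Mf c i (r i)) = (\<Sum>i\<in>{1..t}. Mf c i (\<rho> i))"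
    unfolding t atLeastLessThanSuc_atLeastAtMost by (auto simp: \<rho>_def intro!: sum.cong)
  have row: "(\<Sum>k\<in>{1..n}. c 1 k) = P 1 (Suc n)"
    using supported_zero_below(1)[OF c, of 0 1] unfolding P_def
    by (simp add: atLeast0AtMost[symmetric] lessThan_Suc_atMost sum.atLeast_Suc_atMost)
  have ends: "\<rho> 0 = n" "\<rho> s = s" using t rs(1) by (simp_all add: \<rho>_def)
  have T: "(\<Sum>i\<in>{1..t}. Mf c i (\<rho> i))
      = (\<Sum>k\<in>{1..t}. P k (\<rho> k) - P k (\<rho> (Suc k))) + (\<Sum>k\<in>{1..t}. P k (Suc (\<rho> k)) - P k (Suc (\<rho> (k - 1))))
        + P 1 (Suc (\<rho> 0)) + P t (\<rho> (Suc t)) - P (Suc t) (Suc (\<rho> t))"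
    unfolding P_def by (rule sum_Mf_telescope[OF c \<rho>_ge])
  show ?thesis
    unfolding CE M row T ends P_diag t[symmetric] by (simp add: algebra_simps)
qed

lemma Mf_diag:
  assumes "supported n c" and "1 \<le> i"
  shows "Mf c i i = c i i - c (i - 1) (i - 1)"
proof -
  have "(\<Sum>p<i. c i p) = 0" "(\<Sum>p<Suc i. c (Suc i) p) = 0"
    using supported_zero_below(1)[OF assms(1)] by (simp_all add: sum.neutral)
  moreover have "(\<Sum>p<i. c (i - 1) p) = c (i - 1) (i - 1)"
    using prefix_sum_diag[OF assms(1), of "i - 1"] assms(2) by simp
  ultimately show ?thesis using Mf_prefix_sums[OF assms order_refl] prefix_sum_diag[OF assms(1), of i] by simp
qed

lemma F_tail_sum:
  assumes c: "supported n c" and r: "r \<in> RFs n s" and s: "1 \<le> s" "s \<le> n"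
  shows "(\<Sum>i\<in>{s<..n}. Mf c i (r i)) = c n n - c s s"
proof -
  have "(\<Sum>i\<in>{s<..n}. Mf c i (r i)) = (\<Sum>i\<in>{s<..n}. c i i - c (i - 1) (i - 1))"
    using RFs_tail[OF r s(1)] Mf_diag[OF c] s by (intro sum.cong) auto
  also have "\<dots> = (\<Sum>j\<in>{s..<n}. c (Suc j) (Suc j) - c j j)"
    by (rule sum.reindex_bij_witness[where i = Suc and j = "\<lambda>i. i - 1"]) auto
  also have "\<dots> = c n n - c s s" using sum_Suc_diff'[of s n "\<lambda>j. c j j"] s by simp
  finally show ?thesis .
qed

lemma balance_diff: "balance k (\<lambda>i. X i - Y i) s = balance k X s - balance k Y s"
  by (simp add: balance_def sum_subtractf)

lemma balance_eq_lamS: "1 \<le> s \<Longrightarrow> balance n lam s = lamS n lam s"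
proof -
  assume "1 \<le> s"
  then have "{1..<s} = {1..s - 1}" "{s<..n} = {s + 1..n}" by auto
  then show ?thesis by (simp add: balance_def lamS_def)
qed

lemma F_balance:
  assumes c: "supported n c" and r: "r \<in> RFs n s" and s: "1 \<le> s" "s \<le> n"
  shows "balance n (\<lambda>i. Mf c i (r i) - lam i) s = CE n c r s + (\<Sum>k\<in>{1..n}. c 1 k) - c n n - lamS n lam s"
  using CE_eq[OF assms] F_tail_sum[OF assms] balance_eq_lamS[OF s(1), of n lam]
  by (simp add: balance_diff balance_def)

lemma REs_head:
  assumes r: "r \<in> REs n s" and s: "s \<le> n" and i: "1 \<le> i" "i \<le> s"
  shows "r i = 1"
  using i
proof (induction i)
  case 0 then show ?case by simp
next
  case (Suc i)
  have "1 \<le> r (Suc i)" using r Suc.prems s unfolding REs_def by auto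
  moreover have "r (Suc i) \<le> 1"
  proof (cases i)
    case 0 then show ?thesis using r s Suc.prems unfolding REs_def by auto
  next
    case (Suc i')
    then have "r (Suc i) \<le> r i" using r \<open>Suc i \<le> s\<close> unfolding REs_def Rshape_def by auto
    with Suc.IH Suc.prems \<open>i = Suc i'\<close> show ?thesis by auto
  qed
  ultimately show ?case by simp
qed

lemma Nf_first_column:
  assumes "supported n c" and "i \<le> n"
  shows "Nf n c i 1 = - c 1 (n + 1 - i)"
  using assms supported_zero_below(2)[OF assms(1)] by (simp add: Nf_def Suc_diff_le)

lemma E_head_sum:
  assumes c: "supported n c" and r: "r \<in> REs n s" and s: "1 \<le> s" "s \<le> n"
  shows "(\<Sum>i\<in>{1..<s}. Nf n c i (r i)) = (\<Sum>k\<in>{1..n - s + 1}. c 1 k) - (\<Sum>k\<in>{1..n}. c 1 k)"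
proof -
  have "(\<Sum>i\<in>{1..<s}. Nf n c i (r i)) = - (\<Sum>i\<in>{1..<s}. c 1 (n + 1 - i))"
    unfolding sum_negf[symmetric] using REs_head[OF r s(2)] Nf_first_column[OF c] s
    by (intro sum.cong) auto
  also have "(\<Sum>i\<in>{1..<s}. c 1 (n + 1 - i)) = (\<Sum>k\<in>{n - s + 2..n}. c 1 k)"
    by (rule sum.reindex_bij_witness[where i = "\<lambda>k. n + 1 - k" and j = "\<lambda>k. n + 1 - k"]) (use s in auto)
  also have "(\<Sum>k\<in>{1..n}. c 1 k) = (\<Sum>k\<in>{1..n - s + 1}. c 1 k) + (\<Sum>k\<in>{n - s + 2..n}. c 1 k)"
  proof -
    have "{1..n} = {1..n - s + 1} \<union> {n - s + 2..n}" using s by auto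
    then show ?thesis by (simp add: sum.union_disjoint)
  qed
  ultimately show ?thesis by (simp add: algebra_simps)
qed

lemma E_balance:
  assumes c: "supported n c" and r: "r \<in> REs n s" and s: "1 \<le> s" "s \<le> n"
  shows "balance n (\<lambda>i. Nf n c i (r i)) s = DF n c r s + c n n - (\<Sum>k\<in>{1..n}. c 1 k)"
proof -
  have "{s<..n} = {s + 1..n}" by auto
  then show ?thesis using E_head_sum[OF assms] by (simp add: balance_def DF_def Nf_def)
qed

lemma epsr_entry:
  assumes "i \<in> {1..n}"
  shows "epsr n r i j = (if r i = j then 1 else 0)"
proof -
  have "epsr n r i j = (\<Sum>k\<in>{1..n}. if k = i then (if r i = j then 1 else 0) else 0)"
    unfolding epsr_def uvec_def by (intro sum.cong) auto
  then show ?thesis using assms by simp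
qed

lemma epsr_first_row_sum:
  assumes "r \<in> RFs n s" "1 \<le> s" "s \<le> n"
  shows "(\<Sum>k\<in>{1..n}. epsr n r 1 k) = 1"
  using assms by (simp add: epsr_entry RFs_def)

lemma epsr_last_entry:
  assumes "r \<in> RFs n s" "1 \<le> s" "s \<le> n"
  shows "epsr n r n n = 1"
  using RFs_tail[OF assms(1,2), of n] assms(2,3) by (simp add: epsr_entry)

lemma apow_epsr:
  assumes "\<forall>k\<in>{1..n}. k \<le> r k \<and> r k \<le> n"
  shows "apow n a (epsr n r) = (\<Prod>i\<in>{1..n}. a i (r i))"
  unfolding apow_def
proof (rule prod.cong[OF refl])
  fix i assume i: "i \<in> {1..n}"
  have "(\<Prod>j\<in>{i..n}. a i j powi epsr n r i j) = (\<Prod>j\<in>{i..n}. if r i = j then a i j else 1)"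
    using i by (intro prod.cong) (auto simp: epsr_entry)
  also have "\<dots> = a i (r i)" using assms i by simp
  finally show "(\<Prod>j\<in>{i..n}. a i j powi epsr n r i j) = a i (r i)" .
qed

lemma apow_add:
  assumes "\<forall>i j. valid n i j \<longrightarrow> a i j \<noteq> 0"
  shows "apow n a (\<lambda>p q. x p q + y p q) = apow n a x * apow n a y"
  unfolding apow_def prod.distrib[symmetric]
  using assms by (intro prod.cong refl) (auto simp: valid_def power_int_add)

lemma apow_sum:
  assumes "\<forall>i j. valid n i j \<longrightarrow> a i j \<noteq> 0" and "finite S"
  shows "apow n a (\<lambda>p q. \<Sum>k\<in>S. f k p q) = (\<Prod>k\<in>S. apow n a (f k))"
  using assms(2)
proof (induction S rule: finite_induct)
  case empty then show ?case by (simp add: apow_def)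
next
  case (insert x F)
  then show ?case using apow_add[OF assms(1), of "f x" "\<lambda>p q. \<Sum>k\<in>F. f k p q"] by simp
qed

lemma apow_alphar:
  assumes "\<forall>i j. valid n i j \<longrightarrow> a i j \<noteq> 0"
  shows "apow n a (alphar n r) = (\<Prod>i\<in>{1..n}. apow n a (alpha n i (r i)))"
  unfolding alphar_def by (rule apow_sum[OF assms finite_atLeastAtMost])

lemma alpha_first_row:
  assumes "i \<in> {1..n}"
  shows "alpha n i j 1 k = (if k = n + 2 - i then (if j \<le> 1 \<and> 2 \<le> i then 1 else 0) else 0)
                         - (if k = n + 1 - i then (if j \<le> 1 then 1 else 0) else 0)"
proof -
  have "(k + i = n + 1 + 1) = (k = n + 2 - i)" "(k + i = n + 1) = (k = n + 1 - i)" using assms by auto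
  then show ?thesis using alpha_eq[of i n j 1 k] assms by auto
qed

lemma alphar_first_row_sum:
  assumes r: "r \<in> REs n s" and s: "1 \<le> s" "s \<le> n"
  shows "(\<Sum>k\<in>{1..n}. alphar n r 1 k) = -1"
proof -
  have row: "(\<Sum>k\<in>{1..n}. alpha n i (r i) 1 k) = (if i = 1 then -1 else 0)" if i: "i \<in> {1..n}" for i
  proof -
    have "1 \<le> r i" "r i \<le> i" using r i unfolding REs_def by auto
    moreover have "r 1 = 1" using REs_head[OF r s(2), of 1] s by simp
    moreover have "2 \<le> i \<Longrightarrow> n + 2 - i \<in> {1..n}" "n + 1 - i \<in> {1..n}" using i by auto
    ultimately show ?thesis
      unfolding alpha_first_row[OF i] sum_subtractf using i by auto
  qed
  have "(\<Sum>k\<in>{1..n}. alphar n r 1 k) = (\<Sum>i\<in>{1..n}. \<Sum>k\<in>{1..n}. alpha n i (r i) 1 k)"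
    unfolding alphar_def by (rule sum.swap)
  also have "\<dots> = (\<Sum>i\<in>{1..n}. if i = 1 then -1 else 0)" by (rule sum.cong[OF refl row])
  also have "\<dots> = -1" using s by simp
  finally show ?thesis .
qed

lemma alphar_last_entry:
  assumes "r \<in> REs n s" and "1 \<le> s" "s \<le> n"
  shows "alphar n r n n = -1"
proof -
  have "alphar n r n n = (\<Sum>i\<in>{1..n}. if i = n then -1 else 0)"
    unfolding alphar_def using assms by (intro sum.cong refl) (auto simp: alpha_eq REs_def)
  then show ?thesis using assms by simp
qed

section \<open>The affine generators\<close>

context
  fixes n l :: nat and L :: complex and a b :: cvec and lam :: "nat \<Rightarrow> complex" and m :: idx
  assumes l_pos: "l > 0" and root: "exp L ^ l = 1"
begin

lemma lin_op_rhoKL: "lin_op (rhoKL n l L a b lam j)" "lin_op (rhoKLinv n l L a b lam j)"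
  unfolding rhoKL_def rhoKLinv_def by (rule lin_op_lin)+

lemma smul_rhoKL_rhoKLinv:
  assumes D: "\<And>r. r \<in> P \<Longrightarrow> supported n (iadd m (D r))"
    and N: "N (vbas n l m) = (\<lambda>x. \<Sum>r\<in>P. C r * vbas n l (iadd m (D r)) x)"
  shows "smul c0 (rhoKL n l L a b lam i \<circ> rhoKLinv n l L a b lam i' \<circ> N) (vbas n l m)
   = (\<lambda>x. \<Sum>r\<in>P. C r * (c0 * qpow L (KL_exponent n b lam i' (iadd m (D r)))
                       * qpow L (- KL_exponent n b lam i (iadd m (D r)))) * vbas n l (iadd m (D r)) x)"
proof -
  have "rhoKLinv n l L a b lam i' (N (vbas n l m))
      = (\<lambda>x. \<Sum>r\<in>P. C r * qpow L (KL_exponent n b lam i' (iadd m (D r))) * vbas n l (iadd m (D r)) x)"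
    unfolding N by (rule diagonal_op_sum[OF lin_op_rhoKL(2) rhoKL_vbas(2)[OF l_pos root] D])
  then have "rhoKL n l L a b lam i (rhoKLinv n l L a b lam i' (N (vbas n l m)))
      = (\<lambda>x. \<Sum>r\<in>P. C r * qpow L (KL_exponent n b lam i' (iadd m (D r)))
           * qpow L (- KL_exponent n b lam i (iadd m (D r))) * vbas n l (iadd m (D r)) x)"
    by (simp only: diagonal_op_sum[OF lin_op_rhoKL(1) rhoKL_vbas(1)[OF l_pos root] D])
  then show ?thesis by (simp add: smul_def sum_distrib_left mult_ac)
qed

lemma smul_rhoKLinv_rhoKL:
  assumes D: "\<And>r. r \<in> P \<Longrightarrow> supported n (iadd m (D r))"
    and N: "N (vbas n l m) = (\<lambda>x. \<Sum>r\<in>P. C r * vbas n l (iadd m (D r)) x)"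
  shows "smul c0 (rhoKLinv n l L a b lam i \<circ> rhoKL n l L a b lam i' \<circ> N) (vbas n l m)
   = (\<lambda>x. \<Sum>r\<in>P. C r * (c0 * qpow L (- KL_exponent n b lam i' (iadd m (D r)))
                       * qpow L (KL_exponent n b lam i (iadd m (D r)))) * vbas n l (iadd m (D r)) x)"
proof -
  have "rhoKL n l L a b lam i' (N (vbas n l m))
      = (\<lambda>x. \<Sum>r\<in>P. C r * qpow L (- KL_exponent n b lam i' (iadd m (D r))) * vbas n l (iadd m (D r)) x)"
    unfolding N by (rule diagonal_op_sum[OF lin_op_rhoKL(1) rhoKL_vbas(1)[OF l_pos root] D])
  then have "rhoKLinv n l L a b lam i (rhoKL n l L a b lam i' (N (vbas n l m)))
      = (\<lambda>x. \<Sum>r\<in>P. C r * qpow L (- KL_exponent n b lam i' (iadd m (D r)))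
           * qpow L (KL_exponent n b lam i (iadd m (D r))) * vbas n l (iadd m (D r)) x)"
    by (simp only: diagonal_op_sum[OF lin_op_rhoKL(2) rhoKL_vbas(2)[OF l_pos root] D])
  then show ?thesis by (simp add: smul_def sum_distrib_left mult_ac)
qed

end

lemma sum_sum_factor:
  fixes A :: "'a :: comm_ring"
  assumes "\<And>s r. s \<in> S \<Longrightarrow> r \<in> P s \<Longrightarrow> C s r * G s r = A * T s r"
  shows "(\<lambda>x. \<Sum>s\<in>S. \<Sum>r\<in>P s. C s r * (G s r * v s r x)) = (\<lambda>x. A * (\<Sum>s\<in>S. \<Sum>r\<in>P s. T s r * v s r x))"
proof -
  have "C s r * (G s r * v s r x) = A * (T s r * v s r x)" if "s \<in> S" "r \<in> P s" for s r x
  proof -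
    have "C s r * (G s r * v s r x) = (C s r * G s r) * v s r x" by (rule mult.assoc[symmetric])
    then show ?thesis unfolding assms[OF that] by (simp only: mult.assoc)
  qed
  then show ?thesis by (simp add: sum_distrib_left)
qed

lemma neg_one_power_diff: "s \<le> n \<Longrightarrow> (-1 :: 'a :: ring_1) ^ (n - s) = (-1) ^ (s + n)"
proof -
  assume "s \<le> n"
  then have "s + n = (n - s) + 2 * s" by simp
  then have "(-1 :: 'a) ^ (s + n) = (-1) ^ (n - s) * ((-1) ^ 2) ^ s" by (simp only: power_add power_mult)
  then show ?thesis by simp
qed

lemma qpow_combine:
  "exp (- L) * qpow L x1 * qpow L x2 * qpow L x3 * qpow L x4 = qpow L (- 1 + x1 + x2 + x3 + x4)"
  by (simp only: qpow_add exp_minus_qpow)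

lemma KL_exponent_epsr:
  assumes "r \<in> RFs n s" "1 \<le> s" "s \<le> n"
  shows "KL_exponent n b lam n (iadd m (epsr n r)) = cadd m b n n + 1 - lamLam n lam n"
    and "KL_exponent n b lam 1 (iadd m (epsr n r)) = (\<Sum>k\<in>{1..n}. cadd m b 1 k) + 1 - lamLam n lam 1"
  using epsr_last_entry[OF assms] epsr_first_row_sum[OF assms]
  by (simp_all add: KL_exponent_def cadd_iadd sum.distrib of_int_sum[symmetric])

lemma Mf_diag_cadd:
  assumes "supported n m" "supported n b" "1 \<le> s"
  shows "Mf (cadd m b) s s - lam s = - of_int (m (s - 1) (s - 1)) + of_int (m s s) - b (s - 1) (s - 1) + b s s - lam s"
  using Mf_diag[OF supported_cadd[OF assms(1,2)] assms(3)] by (simp add: cadd_def algebra_simps)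

lemma evE0_plus_coeff:
  assumes m: "supported n m" and b: "supported n b" and r: "r \<in> RFs n s" and s: "1 \<le> s" "s \<le> n"
  shows "(\<Prod>i\<in>{1..n}. a i (r i)) * shape_coeff L n (\<lambda>i. Mf (cadd m b) i (r i) - lam i) s
       * (exp (- L) * apar True n L lam A * qpow L (KL_exponent n b lam n (iadd m (epsr n r)))
          * qpow L (- KL_exponent n b lam 1 (iadd m (epsr n r))))
     = A * ((-1) ^ (s + n) * apow n a (epsr n r) * qpow L ((CE n (cadd m b) r s - lamS n lam s - of_nat s) + of_nat n)
          * qint L (- of_int (m (s-1) (s-1)) + of_int (m s s) - b (s-1) (s-1) + b s s - lam s))"
proof -
  let ?c = "cadd m b"
  note rs = RFs_props[OF r s]
  have exponent: "exp (- L) * qpow L (- lamLam n lam 1 + lamLam n lam n + of_nat n)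
      * qpow L (KL_exponent n b lam n (iadd m (epsr n r))) * qpow L (- KL_exponent n b lam 1 (iadd m (epsr n r)))
      * qpow L (balance n (\<lambda>i. Mf ?c i (r i) - lam i) s - of_nat s + 1)
      = qpow L ((CE n ?c r s - lamS n lam s - of_nat s) + of_nat n)"
    unfolding qpow_combine KL_exponent_epsr[OF r s] F_balance[OF supported_cadd[OF m b] r s]
    by (simp add: algebra_simps)
  have "(\<Prod>i\<in>{1..n}. a i (r i)) = apow n a (epsr n r)" using rs(2) by (simp add: apow_epsr)
  then show ?thesis
    unfolding shape_coeff_def apar_def if_True rs(1) Mf_diag_cadd[OF m b s(1)] neg_one_power_diff[OF s(2)]
      exponent[symmetric] by (simp only: mult_ac)
qed

lemma neg_one_power_pred_add: "1 \<le> s \<Longrightarrow> (-1 :: 'a :: ring_1) ^ (s - 1) * (-1) ^ (n + 1) = (-1) ^ (s + n)"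
proof -
  assume "1 \<le> s"
  then have "s - 1 + (n + 1) = s + n" by simp
  then show ?thesis by (simp only: power_add[symmetric])
qed

lemma evE0_minus_coeff:
  fixes lam :: "nat \<Rightarrow> complex"
  assumes m: "supported n m" and b: "supported n b" and r: "r \<in> RFs n s" and s: "1 \<le> s" "s \<le> n"
  defines "X \<equiv> \<lambda>i. Mf (cadd m b) i (r i) - lam i"
  shows "(\<Prod>i\<in>{1..n}. a i (r i)) * ((-1) ^ (s - 1) * qpow L (- balance n X s - of_nat (n - s)) * qint L (X s))
       * (exp (- L) * apar False n L lam A * qpow L (- KL_exponent n b lam n (iadd m (epsr n r)))
          * qpow L (KL_exponent n b lam 1 (iadd m (epsr n r))))
     = A * ((-1) ^ (s + n) * apow n a (epsr n r) * qpow L (- (CE n (cadd m b) r s - lamS n lam s - of_nat s) + of_nat n)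
          * qint L (- of_int (m (s-1) (s-1)) + of_int (m s s) - b (s-1) (s-1) + b s s - lam s))"
proof -
  let ?c = "cadd m b"
  note rs = RFs_props[OF r s]
  have exponent: "exp (- L) * qpow L (lamLam n lam 1 - lamLam n lam n + 2 * of_nat n + 1)
      * qpow L (- KL_exponent n b lam n (iadd m (epsr n r))) * qpow L (KL_exponent n b lam 1 (iadd m (epsr n r)))
      * qpow L (- balance n X s - of_nat (n - s))
      = qpow L (- (CE n ?c r s - lamS n lam s - of_nat s) + of_nat n)"
    unfolding qpow_combine KL_exponent_epsr[OF r s] X_def F_balance[OF supported_cadd[OF m b] r s]
    using s by (simp add: algebra_simps)
  have "(\<Prod>i\<in>{1..n}. a i (r i)) = apow n a (epsr n r)" using rs(2) by (simp add: apow_epsr)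
  then show ?thesis
    unfolding apar_def if_False X_def rs(1) Mf_diag_cadd[OF m b s(1)] neg_one_power_pred_add[OF s(1), symmetric]
      exponent[symmetric] by (simp only: mult_ac)
qed

lemma qpow_combine_inverse:
  "exp L ^ n * inverse (qpow L x1) * qpow L x2 * qpow L x3 * qpow L x4 = qpow L (of_nat n - x1 + x2 + x3 + x4)"
proof -
  have "exp L ^ n = qpow L (of_nat n)" by (simp add: qpow_def exp_of_nat_mult[symmetric] mult.commute)
  moreover have "inverse (qpow L x1) = qpow L (- x1)" by (simp add: qpow_def exp_minus)
  ultimately show ?thesis by (simp only: diff_conv_add_uminus qpow_add)
qed

lemma KL_exponent_alphar:
  assumes "r \<in> REs n s" "1 \<le> s" "s \<le> n"
  shows "KL_exponent n b lam n (iadd m (alphar n r)) = cadd m b n n - 1 - lamLam n lam n"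
    and "KL_exponent n b lam 1 (iadd m (alphar n r)) = (\<Sum>k\<in>{1..n}. cadd m b 1 k) - 1 - lamLam n lam 1"
  using alphar_last_entry[OF assms] alphar_first_row_sum[OF assms]
  by (simp_all add: KL_exponent_def cadd_iadd sum.distrib of_int_sum[symmetric])

lemma Nf_head_cadd:
  assumes "supported n m" "supported n b" "r \<in> REs n s" "1 \<le> s" "s \<le> n"
  shows "Nf n (cadd m b) s (r s) = - of_int (m 1 (n - s + 1)) - b 1 (n - s + 1)"
  using Nf_first_column[OF supported_cadd[OF assms(1,2)] assms(5)] REs_head[OF assms(3,5) assms(4) order_refl] assms(4,5)
  by (simp add: cadd_def Suc_diff_le)

lemma neg_one_power_pred_diff:
  "1 \<le> s \<Longrightarrow> s \<le> n \<Longrightarrow> (-1 :: 'a :: ring_1) ^ (n - 1) * (-1) ^ (n - s) = (-1) ^ (s - 1)"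
proof -
  assume "1 \<le> s" "s \<le> n"
  then have "n - 1 + (n - s) = (s - 1) + 2 * (n - s)" by simp
  then have "(-1 :: 'a) ^ (n - 1) * (-1) ^ (n - s) = (-1) ^ (s - 1) * ((-1) ^ 2) ^ (n - s)"
    by (metis power_add power_mult)
  then show ?thesis by simp
qed

lemma evF0_plus_coeff:
  fixes lam :: "nat \<Rightarrow> complex"
  assumes m: "supported n m" and b: "supported n b" and a: "\<forall>i j. valid n i j \<longrightarrow> a i j \<noteq> 0"
    and r: "r \<in> REs n s" and s: "1 \<le> s" "s \<le> n"
  defines "Y \<equiv> \<lambda>i. Nf n (cadd m b) i (r i)"
  shows "(\<Prod>i\<in>{1..n}. apow n a (alpha n i (r i))) * shape_coeff L n Y s
       * ((-1) ^ (n - 1) * exp L ^ n * inverse (apar True n L lam A)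
          * qpow L (- KL_exponent n b lam n (iadd m (alphar n r))) * qpow L (KL_exponent n b lam 1 (iadd m (alphar n r))))
     = inverse A * ((-1) ^ (s - 1) * apow n a (alphar n r)
          * qpow L ((DF n (cadd m b) r s - of_nat s + of_nat n + 1) - of_nat n)
          * qint L (- of_int (m 1 (n-s+1)) - b 1 (n-s+1)))"
proof -
  have exponent: "exp L ^ n * inverse (qpow L (- lamLam n lam 1 + lamLam n lam n + of_nat n))
      * qpow L (- KL_exponent n b lam n (iadd m (alphar n r))) * qpow L (KL_exponent n b lam 1 (iadd m (alphar n r)))
      * qpow L (balance n Y s - of_nat s + 1)
      = qpow L ((DF n (cadd m b) r s - of_nat s + of_nat n + 1) - of_nat n)"
    unfolding qpow_combine_inverse KL_exponent_alphar[OF r s] Y_def E_balance[OF supported_cadd[OF m b] r s]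
    by (simp add: algebra_simps)
  show ?thesis
    unfolding shape_coeff_def apar_def if_True inverse_mult_distrib Y_def Nf_head_cadd[OF m b r s]
      apow_alphar[OF a, symmetric] neg_one_power_pred_diff[OF s, symmetric] exponent[unfolded Y_def, symmetric]
    by (simp only: mult_ac)
qed

lemma evF0_minus_coeff:
  fixes lam :: "nat \<Rightarrow> complex"
  assumes m: "supported n m" and b: "supported n b" and a: "\<forall>i j. valid n i j \<longrightarrow> a i j \<noteq> 0"
    and r: "r \<in> REs n s" and s: "1 \<le> s" "s \<le> n"
  defines "Y \<equiv> \<lambda>i. Nf n (cadd m b) i (r i)"
  shows "(\<Prod>i\<in>{1..n}. apow n a (alpha n i (r i))) * ((-1) ^ (s - 1) * qpow L (- balance n Y s - of_nat (n - s)) * qint L (Y s))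
       * ((-1) ^ (n - 1) * exp L ^ n * inverse (apar False n L lam A)
          * qpow L (KL_exponent n b lam n (iadd m (alphar n r))) * qpow L (- KL_exponent n b lam 1 (iadd m (alphar n r))))
     = inverse A * ((-1) ^ (s - 1) * apow n a (alphar n r)
          * qpow L (- (DF n (cadd m b) r s - of_nat s + of_nat n + 1) - of_nat n)
          * qint L (- of_int (m 1 (n-s+1)) - b 1 (n-s+1)))"
proof -
  have exponent: "exp L ^ n * inverse (qpow L (lamLam n lam 1 - lamLam n lam n + 2 * of_nat n + 1))
      * qpow L (KL_exponent n b lam n (iadd m (alphar n r))) * qpow L (- KL_exponent n b lam 1 (iadd m (alphar n r)))
      * qpow L (- balance n Y s - of_nat (n - s))
      = qpow L (- (DF n (cadd m b) r s - of_nat s + of_nat n + 1) - of_nat n)"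
    unfolding qpow_combine_inverse KL_exponent_alphar[OF r s] Y_def E_balance[OF supported_cadd[OF m b] r s]
    using s by (simp add: algebra_simps)
  have sign: "(-1 :: complex) ^ (n - 1) * inverse ((-1) ^ (n + 1)) = 1"
  proof -
    have "n - 1 + (n + 1) = 2 * n" using s by simp
    then have "(-1 :: complex) ^ (n - 1) * (-1) ^ (n + 1) = 1" by (simp only: power_add[symmetric] power_mult) simp
    then show ?thesis by (simp add: power_inverse[symmetric])
  qed
  have "(\<Prod>i\<in>{1..n}. apow n a (alpha n i (r i))) * ((-1) ^ (s - 1) * qpow L (- balance n Y s - of_nat (n - s)) * qint L (Y s))
       * ((-1) ^ (n - 1) * exp L ^ n * inverse (apar False n L lam A)
          * qpow L (KL_exponent n b lam n (iadd m (alphar n r))) * qpow L (- KL_exponent n b lam 1 (iadd m (alphar n r))))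
     = inverse A * (((-1) ^ (n - 1) * inverse ((-1) ^ (n + 1))) * (-1) ^ (s - 1) * apow n a (alphar n r)
          * (exp L ^ n * inverse (qpow L (lamLam n lam 1 - lamLam n lam n + 2 * of_nat n + 1))
             * qpow L (KL_exponent n b lam n (iadd m (alphar n r))) * qpow L (- KL_exponent n b lam 1 (iadd m (alphar n r)))
             * qpow L (- balance n Y s - of_nat (n - s)))
          * qint L (Y s))"
    unfolding apar_def if_False inverse_mult_distrib apow_alphar[OF a] by (simp add: mult_ac)
  also have "\<dots> = inverse A * ((-1) ^ (s - 1) * apow n a (alphar n r)
          * qpow L (- (DF n (cadd m b) r s - of_nat s + of_nat n + 1) - of_nat n)
          * qint L (- of_int (m 1 (n-s+1)) - b 1 (n-s+1)))"
    unfolding exponent sign unfolding Y_def Nf_head_cadd[OF m b r s] by simp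
  finally show ?thesis .
qed

context
  fixes n l :: nat and L A :: complex and a b :: cvec and lam :: "nat \<Rightarrow> complex" and m :: idx
  assumes n: "1 \<le> n" and l_pos: "l > 0" and root: "exp L ^ l = 1" and q_square: "exp L ^ 2 \<noteq> 1"
    and m: "supported n m" and b: "supported n b"
begin

lemma evE0_plus_vbas:
  "evE0 True n l L a b lam (apar True n L lam A) (vbas n l m) =
      (\<lambda>x. A * (\<Sum>s\<in>{1..n}. \<Sum>r\<in>RFs n s.
          (-1) ^ (s + n) * apow n a (epsr n r)
          * qpow L ((CE n (cadd m b) r s - lamS n lam s - of_nat s) + of_nat n)
          * qint L (- of_int (m (s-1) (s-1)) + of_int (m s s) - b (s-1) (s-1) + b s s - lam s)
          * vbas n l (iadd m (epsr n r)) x))"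
proof -
  interpret F: qcomm_chain n l L "rhoF n l L a b lam" "\<lambda>k. {k..n}" uvec a "\<lambda>k m j. Mf (cadd m b) k j - lam k" "(<)"
    by (rule qcomm_chain_rhoF[OF l_pos root q_square])
  have shift: "F.path_shift n r = epsr n r" for r by (simp add: F.path_shift_def epsr_def)
  have N: "nest_up (exp (- L)) (rhoF n l L a b lam) n (vbas n l m)
      = (\<lambda>x. \<Sum>r\<in>F.paths n. (F.path_weight n r * F.shape_sum n m r) * vbas n l (iadd m (epsr n r)) x)"
    using F.nest_up_vbas[of n m] n m by (simp add: shift)
  have D: "supported n (iadd m (epsr n r))" if "r \<in> F.paths n" for r
    using F.supported_path_shift[OF that order_refl order_refl] m by (simp add: shift supported_iadd)
  define G where "G r = exp (- L) * apar True n L lam A * qpow L (KL_exponent n b lam n (iadd m (epsr n r)))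
    * qpow L (- KL_exponent n b lam 1 (iadd m (epsr n r)))" for r
  have "smul (exp (- L) * apar True n L lam A)
      (rhoKL n l L a b lam 1 \<circ> rhoKLinv n l L a b lam n \<circ> nest_up (exp (- L)) (rhoF n l L a b lam) n) (vbas n l m)
    = (\<lambda>x. \<Sum>r\<in>F.paths n. F.path_weight n r * F.shape_sum n m r * G r * vbas n l (iadd m (epsr n r)) x)"
    unfolding G_def using D N by (rule smul_rhoKL_rhoKLinv[OF l_pos root])
  then have "evE0 True n l L a b lam (apar True n L lam A) (vbas n l m)
      = (\<lambda>x. \<Sum>s\<in>{1..n}. \<Sum>r\<in>RFs n s. F.path_weight n r
           * shape_coeff L n (\<lambda>i. Mf (cadd m b) i (r i) - lam i) s * (G r * vbas n l (iadd m (epsr n r)) x))"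
    unfolding evE0_def if_True RFs_eq_shape_paths F.sum_paths_shape_less[OF refl, symmetric]
    by (simp add: mult.assoc)
  also have "\<dots> = (\<lambda>x. A * (\<Sum>s\<in>{1..n}. \<Sum>r\<in>RFs n s.
          (-1) ^ (s + n) * apow n a (epsr n r)
          * qpow L ((CE n (cadd m b) r s - lamS n lam s - of_nat s) + of_nat n)
          * qint L (- of_int (m (s-1) (s-1)) + of_int (m s s) - b (s-1) (s-1) + b s s - lam s)
          * vbas n l (iadd m (epsr n r)) x))"
    by (rule sum_sum_factor, unfold F.path_weight_def G_def, rule evE0_plus_coeff[OF m b]) auto
  finally show ?thesis .
qed

lemma evE0_minus_vbas:
  "evE0 False n l L a b lam (apar False n L lam A) (vbas n l m) =
      (\<lambda>x. A * (\<Sum>s\<in>{1..n}. \<Sum>r\<in>RFs n s.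
          (-1) ^ (s + n) * apow n a (epsr n r)
          * qpow L (- (CE n (cadd m b) r s - lamS n lam s - of_nat s) + of_nat n)
          * qint L (- of_int (m (s-1) (s-1)) + of_int (m s s) - b (s-1) (s-1) + b s s - lam s)
          * vbas n l (iadd m (epsr n r)) x))"
proof -
  interpret F: qcomm_chain n l L "\<lambda>k. rhoF n l L a b lam (n + 1 - k)" "\<lambda>k. {n + 1 - k..n}" "\<lambda>k. uvec (n + 1 - k)"
    "\<lambda>k. a (n + 1 - k)" "\<lambda>k m j. Mf (cadd m b) (n + 1 - k) j - lam (n + 1 - k)" "(\<le>)"
    by (rule qcomm_chain_rhoF_rev[OF l_pos root q_square])
  let ?rev = "reverse_path n"
  have shift: "F.path_shift n (?rev r) = epsr n r" for r
  proof (intro ext)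
    fix p q
    have "F.path_shift n (?rev r) p q = (\<Sum>i\<in>{1..n}. uvec (n + 1 - i) (r (n + 1 - i)) p q)"
      unfolding F.path_shift_def reverse_path_def by (intro sum.cong) auto
    also have "\<dots> = epsr n r p q" unfolding epsr_def by (rule sum_reverse[symmetric])
    finally show "F.path_shift n (?rev r) p q = epsr n r p q" .
  qed
  have weight: "F.path_weight n (?rev r) = (\<Prod>i\<in>{1..n}. a i (r i))" for r
    unfolding F.path_weight_def reverse_path_def prod_reverse[of "\<lambda>i. a i (r i)"] by (intro prod.cong) auto
  have shape: "shape_coeff L n (\<lambda>i. Mf (cadd m b) (n + 1 - i) (?rev r i) - lam (n + 1 - i)) (n + 1 - s)
      = (-1) ^ (s - 1) * qpow L (- balance n (\<lambda>i. Mf (cadd m b) i (r i) - lam i) s - of_nat (n - s))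
        * qint L (Mf (cadd m b) s (r s) - lam s)" if "s \<in> {1..n}" for r s
    by (rule shape_coeff_reverse) (use that in \<open>auto simp: reverse_path_def\<close>)
  have N: "nest_up (exp (- L)) (\<lambda>k. rhoF n l L a b lam (n + 1 - k)) n (vbas n l m)
      = (\<lambda>x. \<Sum>r\<in>F.paths n. (F.path_weight n r * F.shape_sum n m r) * vbas n l (iadd m (F.path_shift n r)) x)"
    using F.nest_up_vbas[of n m] n m by simp
  have D: "supported n (iadd m (F.path_shift n r))" if "r \<in> F.paths n" for r
    using F.supported_path_shift[OF that order_refl order_refl] m by (simp add: supported_iadd)
  define G where "G u = exp (- L) * apar False n L lam A * qpow L (- KL_exponent n b lam n (iadd m u))
    * qpow L (KL_exponent n b lam 1 (iadd m u))" for u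
  have "smul (exp (- L) * apar False n L lam A)
      (rhoKLinv n l L a b lam 1 \<circ> rhoKL n l L a b lam n \<circ> nest_up (exp (- L)) (\<lambda>k. rhoF n l L a b lam (n + 1 - k)) n)
      (vbas n l m)
    = (\<lambda>x. \<Sum>r\<in>F.paths n. F.path_weight n r * F.shape_sum n m r * G (F.path_shift n r)
        * vbas n l (iadd m (F.path_shift n r)) x)"
    unfolding G_def using D N by (rule smul_rhoKLinv_rhoKL[OF l_pos root])
  then have "evE0 False n l L a b lam (apar False n L lam A) (vbas n l m)
      = (\<lambda>x. \<Sum>r\<in>F.paths n. F.path_weight n r * F.shape_sum n m r
           * (G (F.path_shift n r) * vbas n l (iadd m (F.path_shift n r)) x))"
    unfolding evE0_def if_False nest_down_def by (simp add: mult.assoc)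
  also have "\<dots> = (\<lambda>x. \<Sum>s\<in>{1..n}. \<Sum>r\<in>RFs n s. F.path_weight n (?rev r)
      * shape_coeff L n (\<lambda>i. Mf (cadd m b) (n + 1 - i) (?rev r i) - lam (n + 1 - i)) (n + 1 - s)
      * (G (epsr n r) * vbas n l (iadd m (epsr n r)) x))"
    unfolding F.sum_paths_shape_reverse_le[where J' = "\<lambda>k. {k..n}", OF refl refl] RFs_eq_shape_paths shift ..
  also have "\<dots> = (\<lambda>x. A * (\<Sum>s\<in>{1..n}. \<Sum>r\<in>RFs n s.
          (-1) ^ (s + n) * apow n a (epsr n r)
          * qpow L (- (CE n (cadd m b) r s - lamS n lam s - of_nat s) + of_nat n)
          * qint L (- of_int (m (s-1) (s-1)) + of_int (m s s) - b (s-1) (s-1) + b s s - lam s)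
          * vbas n l (iadd m (epsr n r)) x))"
    by (rule sum_sum_factor, simp only: weight shape G_def, rule evE0_minus_coeff[OF m b]) auto
  finally show ?thesis .
qed

lemma evF0_plus_vbas:
  assumes a: "\<forall>i j. valid n i j \<longrightarrow> a i j \<noteq> 0"
  shows "evF0 True n l L a b lam (apar True n L lam A) (vbas n l m) =
      (\<lambda>x. inverse A * (\<Sum>s\<in>{1..n}. \<Sum>r\<in>REs n s.
          (-1) ^ (s - 1) * apow n a (alphar n r)
          * qpow L ((DF n (cadd m b) r s - of_nat s + of_nat n + 1) - of_nat n)
          * qint L (- of_int (m 1 (n-s+1)) - b 1 (n-s+1))
          * vbas n l (iadd m (alphar n r)) x))"
proof -
  interpret E: qcomm_chain n l L "rhoE n l L a b lam" "\<lambda>k. {1..k}" "alpha n" "\<lambda>k j. apow n a (alpha n k j)"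
    "\<lambda>k m j. Nf n (cadd m b) k j" "(<)"
    by (rule qcomm_chain_rhoE[OF l_pos root q_square])
  have shift: "E.path_shift n r = alphar n r" for r by (simp add: E.path_shift_def alphar_def)
  have N: "nest_up (exp (- L)) (rhoE n l L a b lam) n (vbas n l m)
      = (\<lambda>x. \<Sum>r\<in>E.paths n. (E.path_weight n r * E.shape_sum n m r) * vbas n l (iadd m (alphar n r)) x)"
    using E.nest_up_vbas[of n m] n m by (simp add: shift)
  have D: "supported n (iadd m (alphar n r))" if "r \<in> E.paths n" for r
    using E.supported_path_shift[OF that order_refl order_refl] m by (simp add: shift supported_iadd)
  define G where "G r = (-1) ^ (n - 1) * exp L ^ n * inverse (apar True n L lam A)
    * qpow L (- KL_exponent n b lam n (iadd m (alphar n r))) * qpow L (KL_exponent n b lam 1 (iadd m (alphar n r)))" for r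
  have "smul ((-1) ^ (n - 1) * exp L ^ n * inverse (apar True n L lam A))
      (rhoKLinv n l L a b lam 1 \<circ> rhoKL n l L a b lam n \<circ> nest_up (exp (- L)) (rhoE n l L a b lam) n) (vbas n l m)
    = (\<lambda>x. \<Sum>r\<in>E.paths n. E.path_weight n r * E.shape_sum n m r * G r * vbas n l (iadd m (alphar n r)) x)"
    unfolding G_def using D N by (rule smul_rhoKLinv_rhoKL[OF l_pos root])
  then have "evF0 True n l L a b lam (apar True n L lam A) (vbas n l m)
      = (\<lambda>x. \<Sum>s\<in>{1..n}. \<Sum>r\<in>REs n s. E.path_weight n r
           * shape_coeff L n (\<lambda>i. Nf n (cadd m b) i (r i)) s * (G r * vbas n l (iadd m (alphar n r)) x))"
    unfolding evF0_def if_True REs_eq_shape_paths E.sum_paths_shape_less[OF refl, symmetric]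
    by (simp add: mult.assoc)
  also have "\<dots> = (\<lambda>x. inverse A * (\<Sum>s\<in>{1..n}. \<Sum>r\<in>REs n s.
          (-1) ^ (s - 1) * apow n a (alphar n r)
          * qpow L ((DF n (cadd m b) r s - of_nat s + of_nat n + 1) - of_nat n)
          * qint L (- of_int (m 1 (n-s+1)) - b 1 (n-s+1))
          * vbas n l (iadd m (alphar n r)) x))"
    by (rule sum_sum_factor, unfold E.path_weight_def G_def, rule evF0_plus_coeff[OF m b a]) auto
  finally show ?thesis .
qed

lemma evF0_minus_vbas:
  assumes a: "\<forall>i j. valid n i j \<longrightarrow> a i j \<noteq> 0"
  shows "evF0 False n l L a b lam (apar False n L lam A) (vbas n l m) =
      (\<lambda>x. inverse A * (\<Sum>s\<in>{1..n}. \<Sum>r\<in>REs n s.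
          (-1) ^ (s - 1) * apow n a (alphar n r)
          * qpow L (- (DF n (cadd m b) r s - of_nat s + of_nat n + 1) - of_nat n)
          * qint L (- of_int (m 1 (n-s+1)) - b 1 (n-s+1))
          * vbas n l (iadd m (alphar n r)) x))"
proof -
  interpret E: qcomm_chain n l L "\<lambda>k. rhoE n l L a b lam (n + 1 - k)" "\<lambda>k. {1..n + 1 - k}" "\<lambda>k. alpha n (n + 1 - k)"
    "\<lambda>k j. apow n a (alpha n (n + 1 - k) j)" "\<lambda>k m j. Nf n (cadd m b) (n + 1 - k) j" "(\<le>)"
    by (rule qcomm_chain_rhoE_rev[OF l_pos root q_square])
  let ?rev = "reverse_path n"
  have shift: "E.path_shift n (?rev r) = alphar n r" for r
  proof (intro ext)
    fix p q
    have "E.path_shift n (?rev r) p q = (\<Sum>i\<in>{1..n}. alpha n (n + 1 - i) (r (n + 1 - i)) p q)"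
      unfolding E.path_shift_def reverse_path_def by (intro sum.cong) auto
    also have "\<dots> = alphar n r p q" unfolding alphar_def by (rule sum_reverse[symmetric])
    finally show "E.path_shift n (?rev r) p q = alphar n r p q" .
  qed
  have weight: "E.path_weight n (?rev r) = (\<Prod>i\<in>{1..n}. apow n a (alpha n i (r i)))" for r
    unfolding E.path_weight_def reverse_path_def prod_reverse[of "\<lambda>i. apow n a (alpha n i (r i))"]
    by (intro prod.cong) auto
  have shape: "shape_coeff L n (\<lambda>i. Nf n (cadd m b) (n + 1 - i) (?rev r i)) (n + 1 - s)
      = (-1) ^ (s - 1) * qpow L (- balance n (\<lambda>i. Nf n (cadd m b) i (r i)) s - of_nat (n - s))
        * qint L (Nf n (cadd m b) s (r s))" if "s \<in> {1..n}" for r s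
    by (rule shape_coeff_reverse) (use that in \<open>auto simp: reverse_path_def\<close>)
  have N: "nest_up (exp (- L)) (\<lambda>k. rhoE n l L a b lam (n + 1 - k)) n (vbas n l m)
      = (\<lambda>x. \<Sum>r\<in>E.paths n. (E.path_weight n r * E.shape_sum n m r) * vbas n l (iadd m (E.path_shift n r)) x)"
    using E.nest_up_vbas[of n m] n m by simp
  have D: "supported n (iadd m (E.path_shift n r))" if "r \<in> E.paths n" for r
    using E.supported_path_shift[OF that order_refl order_refl] m by (simp add: supported_iadd)
  define G where "G u = (-1) ^ (n - 1) * exp L ^ n * inverse (apar False n L lam A)
    * qpow L (KL_exponent n b lam n (iadd m u)) * qpow L (- KL_exponent n b lam 1 (iadd m u))" for u
  have "smul ((-1) ^ (n - 1) * exp L ^ n * inverse (apar False n L lam A))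
      (rhoKL n l L a b lam 1 \<circ> rhoKLinv n l L a b lam n \<circ> nest_up (exp (- L)) (\<lambda>k. rhoE n l L a b lam (n + 1 - k)) n)
      (vbas n l m)
    = (\<lambda>x. \<Sum>r\<in>E.paths n. E.path_weight n r * E.shape_sum n m r * G (E.path_shift n r)
        * vbas n l (iadd m (E.path_shift n r)) x)"
    unfolding G_def using D N by (rule smul_rhoKL_rhoKLinv[OF l_pos root])
  then have "evF0 False n l L a b lam (apar False n L lam A) (vbas n l m)
      = (\<lambda>x. \<Sum>r\<in>E.paths n. E.path_weight n r * E.shape_sum n m r
           * (G (E.path_shift n r) * vbas n l (iadd m (E.path_shift n r)) x))"
    unfolding evF0_def if_False nest_down_def by (simp add: mult.assoc)
  also have "\<dots> = (\<lambda>x. \<Sum>s\<in>{1..n}. \<Sum>r\<in>REs n s. E.path_weight n (?rev r)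
      * shape_coeff L n (\<lambda>i. Nf n (cadd m b) (n + 1 - i) (?rev r i)) (n + 1 - s)
      * (G (alphar n r) * vbas n l (iadd m (alphar n r)) x))"
    unfolding E.sum_paths_shape_reverse_le[where J' = "\<lambda>k. {1..k}", OF refl refl] REs_eq_shape_paths shift ..
  also have "\<dots> = (\<lambda>x. inverse A * (\<Sum>s\<in>{1..n}. \<Sum>r\<in>REs n s.
          (-1) ^ (s - 1) * apow n a (alphar n r)
          * qpow L (- (DF n (cadd m b) r s - of_nat s + of_nat n + 1) - of_nat n)
          * qint L (- of_int (m 1 (n-s+1)) - b 1 (n-s+1))
          * vbas n l (iadd m (alphar n r)) x))"
    by (rule sum_sum_factor, simp only: weight shape G_def, rule evF0_minus_coeff[OF m b a]) auto
  finally show ?thesis .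
qed
end

theorem theorem5p5:
  fixes n l :: nat and L A :: complex and a b :: cvec and lam :: "nat \<Rightarrow> complex"
    and pl :: bool and m :: idx
  assumes "n \<ge> 1" and "l > 2" and "odd l" and "coprime l (n + 1)"
    and "exp L ^ l = 1" and "\<forall>k. 0 < k \<and> k < l \<longrightarrow> exp L ^ k \<noteq> 1"
    and "\<forall>i j. valid n i j \<longrightarrow> a i j \<noteq> 0"
    and "\<forall>i j. \<not> valid n i j \<longrightarrow> b i j = 0"
    and "A \<noteq> 0"
    and "m \<in> basis_idx n l"
  shows "(\<forall>i\<in>{1..n}.
            evt pl n l L a b lam A (Eg i) (vbas n l m) = rhoE n l L a b lam i (vbas n l m)
          \<and> evt pl n l L a b lam A (Fg i) (vbas n l m) = rhoF n l L a b lam i (vbas n l m)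
          \<and> evt pl n l L a b lam A (Kg i) (vbas n l m) = rhoKa n l L a b lam i (vbas n l m))
   \<and> evt pl n l L a b lam A (Eg 0) (vbas n l m) =
      (\<lambda>k. A * (\<Sum>s\<in>{1..n}. \<Sum>r\<in>RFs n s.
          (-1) ^ (s + n) * apow n a (epsr n r)
          * qpow L ((if pl then 1 else -1) * (CE n (cadd m b) r s - lamS n lam s - of_nat s) + of_nat n)
          * qint L (- of_int (m (s-1) (s-1)) + of_int (m s s) - b (s-1) (s-1) + b s s - lam s)
          * vbas n l (iadd m (epsr n r)) k))
   \<and> evt pl n l L a b lam A (Fg 0) (vbas n l m) =
      (\<lambda>k. inverse A * (\<Sum>s\<in>{1..n}. \<Sum>r\<in>REs n s.
          (-1) ^ (s - 1) * apow n a (alphar n r)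
          * qpow L ((if pl then 1 else -1) * (DF n (cadd m b) r s - of_nat s + of_nat n + 1) - of_nat n)
          * qint L (- of_int (m 1 (n-s+1)) - b 1 (n-s+1))
          * vbas n l (iadd m (alphar n r)) k))"
proof -
  have l_pos: "l > 0" and q_square: "exp L ^ 2 \<noteq> 1" using assms(2,6) by auto
  have m: "supported n m" using assms(10) by (rule supported_basis_idx)
  have b: "supported n b" using assms(8) by (simp add: supported_def)
  note E0 = evE0_plus_vbas[OF assms(1) l_pos assms(5) q_square m b]
    evE0_minus_vbas[OF assms(1) l_pos assms(5) q_square m b]
  note F0 = evF0_plus_vbas[OF assms(1) l_pos assms(5) q_square m b assms(7)]
    evF0_minus_vbas[OF assms(1) l_pos assms(5) q_square m b assms(7)]
  show ?thesis by (cases pl) (simp_all add: E0 F0)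
qed

end
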